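(* Consider the primal–dual SDP pair and the one-step ADMM iteration described in the context, under the standing assumptions there ($\mathcal A$ surjective, nonempty KKT set), and suppose $Z^{(k)}\to Z_\star=X_\star-\sigma S_\star$, where $(X_\star,y_\star,S_\star)$ is a KKT point with $\operatorname{rank}X_\star+\operatorname{rank}S_\star=n$. Let $\mathcal Z_\star$ be the set of fixed points of the one-step ADMM map. Then for any $\rho_0\in(\|\mathcal M-\Pi_{\mathrm{Fix}(\mathcal M)}\|_{\mathrm{op}},1)$ there exists $\bar k\in\mathbb N$ such that $\operatorname{dist}(Z^{(k)},\mathcal Z_\star)$ converges R-linearly for $k\ge\bar k$; i.e., there exist $\alpha>0$ and $\rho\in(0,1)$ with $\operatorname{dist}(Z^{(k)},\mathcal Z_\star)\le\alpha\rho^k$ for all integers $k\ge\bar k$.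
   Context: $\mathbb S^n$ denotes the real symmetric $n\times n$ matrices with inner product $\langle X,Y\rangle=\operatorname{tr}(XY)$ and Frobenius norm $\|\cdot\|_F$; $\mathbb S^n_+$ is the positive semidefinite cone and $\Pi_{\mathbb S^n_+}$ the Frobenius-orthogonal projection onto it; $\operatorname{dist}(Z,\mathcal S)=\inf_{W\in\mathcal S}\|Z-W\|_F$. Data $C,A_1,\dots,A_m\in\mathbb S^n$, $b\in\mathbb R^m$; $\mathcal A X=(\langle A_1,X\rangle,\dots,\langle A_m,X\rangle)$, $\mathcal A^*y=\sum_i y_iA_i$. Primal: minimize $\langle C,X\rangle$ s.t. $\mathcal AX=b$, $X\in\mathbb S^n_+$; dual: maximize $b^\top y$ s.t. $\mathcal A^*y+S=C$, $S\in\mathbb S^n_+$. A KKT point is $(X,y,S)$ with $\mathcal AX=b$, $\mathcal A^*y+S=C$, $\langle X,S\rangle=0$, $X,S\in\mathbb S^n_+$. Standing assumptions: $\mathcal A$ is surjective and the KKT set is nonempty. Let $\mathcal P=\mathcal A^*(\mathcal A\mathcal A^* )^{-1}\mathcal A$ (orthogonal projection onto the range of $\mathcal A^*$) and $\mathcal P^\perp=\mathrm{Id}-\mathcal P$. For fixed $\sigma>0$ and $Z^{(0)}\in\mathbb S^n$, one-step ADMM is $Z^{(k+1)}=\mathcal P(-2\Pi_{\mathbb S^n_+}(Z^{(k)})+Z^{(k)})+\Pi_{\mathbb S^n_+}(Z^{(k)})+\mathcal A^*(\mathcal A\mathcal A^* )^{-1}b+\sigma\mathcal PC-\sigma C$.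 Since $X_\star,S_\star\succeq0$, $\langle X_\star,S_\star\rangle=0$ and strict complementarity holds, there is an orthogonal $Q_\star$ with $Z_\star=Q_\star\operatorname{diag}(\lambda_1,\dots,\lambda_n)Q_\star^\top$, $\lambda_1\ge\dots\ge\lambda_r>0>\lambda_{r+1}\ge\dots\ge\lambda_n$, $r=\operatorname{rank}X_\star$, $X_\star=Q_\star\operatorname{diag}(\lambda_1,\dots,\lambda_r,0,\dots,0)Q_\star^\top$. Define $\Theta\in\mathbb R^{(n-r)\times r}$ by $\Theta_{ij}=\lambda_j/(\lambda_j-\lambda_{i+r})$ and $\Omega=\begin{pmatrix}E_r&\Theta^\top\\ \Theta&0\end{pmatrix}\in\mathbb S^n$ ($E_r$ the all-ones $r\times r$ matrix). Let $\circ$ be the Hadamard product, $\mathcal D(H)=Q_\star(\Omega\circ(Q_\star^\top HQ_\star))Q_\star^\top$, $\mathcal D^\perp(H)=H-\mathcal D(H)$, and $\mathcal M(H)=\mathcal P\mathcal D^\perp(H)+\mathcal P^\perp\mathcal D(H)$, a linear map on $\mathbb S^n$. $\mathrm{Fix}(\mathcal M)=\{H:\mathcal M(H)=H\}$, $\Pi_{\mathrm{Fix}(\mathcal M)}$ is the orthogonal projection onto this subspace, and $\|\cdot\|_{\mathrm{op}}$ is the operator norm induced by $\|\cdot\|_F$. *)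

theory Defs
  imports "HOL-Analysis.Analysis"
begin

text \<open>Real n x n matrices are modelled as real^'n^'n (index type 'n finite, n = CARD('n)).
  The Euclidean norm/inner product on this type is exactly the Frobenius norm/inner product.\<close>

definition sym_mats :: "(real^'n^'n) set" where
  "sym_mats = {X. transpose X = X}"

definition frob :: "real^'n^'n \<Rightarrow> real^'n^'n \<Rightarrow> real" where
  "frob X Y = trace (X ** Y)"

definition psd_cone :: "(real^'n^'n) set" where
  "psd_cone = {X. transpose X = X \<and> (\<forall>v. 0 \<le> v \<bullet> (X *v v))}"

definition proj_psd :: "real^'n^'n \<Rightarrow> real^'n^'n" where
  "proj_psd Z = closest_point psd_cone Z"

definition opA :: "('m::finite \<Rightarrow> real^'n^'n) \<Rightarrow> real^'n^'n \<Rightarrow> real^'m" where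
  "opA A X = (\<chi> i. frob (A i) X)"

definition opAadj :: "('m::finite \<Rightarrow> real^'n^'n) \<Rightarrow> real^'m \<Rightarrow> real^'n^'n" where
  "opAadj A y = (\<Sum>i\<in>UNIV. (y $ i) *\<^sub>R A i)"

text \<open>Matrix of \<A>\<A>^* (Gram matrix), so (\<A>\<A>^*) y = gramA A *v y.\<close>
definition gramA :: "('m::finite \<Rightarrow> real^'n^'n) \<Rightarrow> real^'m^'m" where
  "gramA A = (\<chi> i j. frob (A i) (A j))"

definition projP :: "('m::finite \<Rightarrow> real^'n^'n) \<Rightarrow> real^'n^'n \<Rightarrow> real^'n^'n" where
  "projP A X = opAadj A (matrix_inv (gramA A) *v opA A X)"

definition admm_step :: "('m::finite \<Rightarrow> real^'n^'n) \<Rightarrow> real^'m \<Rightarrow> real^'n^'n \<Rightarrow> real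
     \<Rightarrow> real^'n^'n \<Rightarrow> real^'n^'n" where
  "admm_step A b C \<sigma> Z =
     projP A (- 2 *\<^sub>R proj_psd Z + Z) + proj_psd Z
     + opAadj A (matrix_inv (gramA A) *v b) + \<sigma> *\<^sub>R projP A C - \<sigma> *\<^sub>R C"

definition is_KKT :: "('m::finite \<Rightarrow> real^'n^'n) \<Rightarrow> real^'m \<Rightarrow> real^'n^'n
     \<Rightarrow> real^'n^'n \<Rightarrow> real^'m \<Rightarrow> real^'n^'n \<Rightarrow> bool" where
  "is_KKT A b C X y S \<longleftrightarrow> opA A X = b \<and> opAadj A y + S = C \<and> frob X S = 0
     \<and> X \<in> psd_cone \<and> S \<in> psd_cone"

definition diag_mat :: "real^'n \<Rightarrow> real^'n^'n" where
  "diag_mat l = (\<chi> i j. if i = j then l $ i else 0)"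

definition hadamard :: "real^'n^'n \<Rightarrow> real^'n^'n \<Rightarrow> real^'n^'n" where
  "hadamard M N = (\<chi> i j. M $ i $ j * N $ i $ j)"

text \<open>The matrix \<Omega>, written index-wise: indices with positive eigenvalue form the
  first block (size r), those with negative eigenvalue the second block.\<close>
definition Omega :: "real^'n \<Rightarrow> real^'n^'n" where
  "Omega l = (\<chi> i j.
     if 0 < l $ i \<and> 0 < l $ j then 1
     else if l $ i < 0 \<and> 0 < l $ j then l $ j / (l $ j - l $ i)
     else if 0 < l $ i \<and> l $ j < 0 then l $ i / (l $ i - l $ j)
     else 0)"

definition opD :: "real^'n^'n \<Rightarrow> real^'n \<Rightarrow> real^'n^'n \<Rightarrow> real^'n^'n" where
  "opD Q l H = Q ** hadamard (Omega l) (transpose Q ** H ** Q) ** transpose Q"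

definition opM :: "('m::finite \<Rightarrow> real^'n^'n) \<Rightarrow> real^'n^'n \<Rightarrow> real^'n \<Rightarrow> real^'n^'n \<Rightarrow> real^'n^'n" where
  "opM A Q l H = projP A (H - opD Q l H) + (opD Q l H - projP A (opD Q l H))"

definition fix_sym :: "(real^'n^'n \<Rightarrow> real^'n^'n) \<Rightarrow> (real^'n^'n) set" where
  "fix_sym L = {H \<in> sym_mats. L H = H}"

definition sym_opnorm :: "(real^'n^'n \<Rightarrow> real^'n^'n) \<Rightarrow> real" where
  "sym_opnorm L = (SUP H \<in> {H \<in> sym_mats. H \<noteq> 0}. norm (L H) / norm H)"

end

theory Submission
  imports Defs
begin

(*
  Write Z* = X* - sigma S* = Q diag(lam) Q^T and let Pi be the projection onto the PSD cone.
  In the eigenbasis a fixed point H of M is block diagonal with respect to the signs of lam, so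
  for small H the projection of Z* + H just keeps its positive block, and Z* + H is a fixed
  point of the ADMM map T. Around such a point T is affine with linear part M up to an error
  of order |E| (|E| + |H|), E = Z - (Z* + H): the only nonlinearity is Pi, and for
  X = Pi(Z), Y = Pi(Z) - Z the complementarity X Y = 0 makes the diagonal blocks of the
  remainder quadratically small and its off-diagonal blocks equal to Omega o E up to quadratic
  terms. Taking H as the projection of Z_k - Z* onto Fix(M), the distance of Z_k - Z* to
  Fix(M) therefore contracts by |M - Pi_Fix(M)| + eps per step once Z_k is close to Z*, and
  Z* + H is a fixed point at that distance from Z_k.
*)

lemma inner_matrix_entries: "(X::real^'n^'n) \<bullet> Y = (\<Sum>i\<in>UNIV. \<Sum>j\<in>UNIV. X$i$j * Y$i$j)"
  by (simp add: inner_vec_def)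

lemma inner_matrix_trace: "(X::real^'n^'n) \<bullet> Y = trace (transpose X ** Y)"
  unfolding trace_def inner_vec_def matrix_matrix_mult_def transpose_def
  by (simp, rule sum.swap)

lemma symmetric_iff_entries: "transpose (X::real^'n^'n) = X \<longleftrightarrow> (\<forall>i j. X$i$j = X$j$i)"
  by (auto simp: transpose_def vec_eq_iff)

lemma subspace_sym_mats: "subspace (sym_mats :: (real^'n^'n) set)"
  by (auto simp: subspace_def sym_mats_def symmetric_iff_entries)

lemma frob_eq_inner:
  assumes "transpose (B::real^'n^'n) = B"
  shows "frob B X = B \<bullet> X"
proof -
  have "frob B X = (\<Sum>i\<in>UNIV. \<Sum>k\<in>UNIV. B$k$i * X$k$i)"
    using assms by (simp add: frob_def trace_def matrix_matrix_mult_def symmetric_iff_entries)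
  also have "\<dots> = (\<Sum>k\<in>UNIV. \<Sum>i\<in>UNIV. B$k$i * X$k$i)" by (rule sum.swap)
  also have "\<dots> = B \<bullet> X" by (simp add: inner_matrix_entries)
  finally show ?thesis .
qed

lemma matrix_add_rdistrib: "((A::real^'n^'n) + B) ** C = A ** C + B ** C"
  by (simp add: matrix_matrix_mult_def vec_eq_iff algebra_simps sum.distrib)
lemma matrix_diff_ldistrib: "(C::real^'n^'n) ** (A - B) = C ** A - C ** B"
  by (simp add: matrix_matrix_mult_def vec_eq_iff algebra_simps sum_subtractf)
lemma matrix_diff_rdistrib: "((A::real^'n^'n) - B) ** C = A ** C - B ** C"
  by (simp add: matrix_matrix_mult_def vec_eq_iff algebra_simps sum_subtractf)
lemma matrix_scaleR_left: "(t *\<^sub>R (A::real^'n^'n)) ** C = t *\<^sub>R (A ** C)"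
  by (simp add: matrix_matrix_mult_def vec_eq_iff algebra_simps sum_distrib_left)
lemma matrix_scaleR_right: "(C::real^'n^'n) ** (t *\<^sub>R A) = t *\<^sub>R (C ** A)"
  by (simp add: matrix_matrix_mult_def vec_eq_iff algebra_simps sum_distrib_left)

lemma linear_frob: "linear (frob B)"
  by (intro linearI)
     (simp_all add: frob_def matrix_add_ldistrib trace_add matrix_scaleR_right trace_def
        sum_distrib_left sum.distrib)

lemma norm_matrix_sq_entries: "(norm (X::real^'n^'n))\<^sup>2 = (\<Sum>i\<in>UNIV. \<Sum>j\<in>UNIV. (X$i$j)\<^sup>2)"
  unfolding power2_norm_eq_inner inner_matrix_entries by (simp only: power2_eq_square)

lemma norm_matrix_sq_rows: "(norm (X::real^'n^'n))\<^sup>2 = (\<Sum>i\<in>UNIV. (norm (X$i))\<^sup>2)"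
  unfolding power2_norm_eq_inner inner_vec_def by (rule refl)

lemma norm_matrix_le_entrywise:
  fixes X Y :: "real^'n^'n"
  assumes "\<And>i j. \<bar>X$i$j\<bar> \<le> \<bar>Y$i$j\<bar>"
  shows "norm X \<le> norm Y"
proof -
  have "(norm X)\<^sup>2 \<le> (norm Y)\<^sup>2"
    unfolding norm_matrix_sq_entries
    by (intro sum_mono) (simp add: abs_le_square_iff[symmetric] assms)
  then show ?thesis by (rule power2_le_imp_le[OF _ norm_ge_zero])
qed

lemma norm_transpose_matrix: "norm (transpose (X::real^'n^'n)) = norm X"
proof -
  have "(norm (transpose X))\<^sup>2 = (norm X)\<^sup>2"
    unfolding norm_matrix_sq_entries transpose_def by (simp, rule sum.swap)
  then show ?thesis by (rule power2_eq_imp_eq[OF _ norm_ge_zero norm_ge_zero])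
qed

lemma norm_matrix_vector_le: "norm ((H::real^'n^'n) *v w) \<le> norm H * norm w"
proof -
  have "(norm (H *v w))\<^sup>2 = (\<Sum>i\<in>UNIV. (H$i \<bullet> w)\<^sup>2)"
    unfolding power2_norm_eq_inner inner_vec_def[of "H *v w"]
    by (simp only: matrix_vector_mul_component power2_eq_square inner_real_def)
  also have "\<dots> \<le> (\<Sum>i\<in>UNIV. (norm (H$i) * norm w)\<^sup>2)"
  proof (intro sum_mono)
    fix i
    have "\<bar>H$i \<bullet> w\<bar> \<le> norm (H$i) * norm w" by (rule Cauchy_Schwarz_ineq2)
    from power_mono[OF this abs_ge_zero, of 2]
    show "(H$i \<bullet> w)\<^sup>2 \<le> (norm (H$i) * norm w)\<^sup>2" by simp
  qed
  also have "\<dots> = (norm H * norm w)\<^sup>2"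
    by (simp add: norm_matrix_sq_rows power_mult_distrib sum_distrib_right)
  finally show ?thesis by (rule power2_le_imp_le[OF _ mult_nonneg_nonneg[OF norm_ge_zero norm_ge_zero]])
qed

lemma norm_matrix_mult_le: "norm ((A::real^'n^'n) ** (B::real^'n^'n)) \<le> norm A * norm B"
proof -
  have row: "(A ** B)$i = transpose B *v (A$i)" for i
    by (simp add: matrix_matrix_mult_def matrix_vector_mult_def transpose_def vec_eq_iff mult.commute)
  have "(norm (A ** B))\<^sup>2 = (\<Sum>i\<in>UNIV. (norm ((A ** B)$i))\<^sup>2)" by (rule norm_matrix_sq_rows)
  also have "\<dots> \<le> (\<Sum>i\<in>UNIV. (norm B * norm (A$i))\<^sup>2)"
    unfolding row
  proof (intro sum_mono power_mono norm_ge_zero)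
    show "norm (transpose B *v A$i) \<le> norm B * norm (A$i)" for i
      using norm_matrix_vector_le[of "transpose B" "A$i"] by (simp add: norm_transpose_matrix)
  qed
  also have "\<dots> = (norm A * norm B)\<^sup>2"
    by (simp add: norm_matrix_sq_rows[of A] power_mult_distrib sum_distrib_left mult.commute)
  finally show ?thesis by (rule power2_le_imp_le[OF _ mult_nonneg_nonneg[OF norm_ge_zero norm_ge_zero]])
qed

section \<open>Quadratic forms and the positive semidefinite cone\<close>

definition quad_form :: "real^'n^'n \<Rightarrow> real^'n \<Rightarrow> real" where
  "quad_form X v = (\<Sum>i\<in>UNIV. \<Sum>j\<in>UNIV. v$i * X$i$j * v$j)"

definition bilin_form :: "real^'n^'n \<Rightarrow> real^'n \<Rightarrow> real^'n \<Rightarrow> real" where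
  "bilin_form X v w = (\<Sum>i\<in>UNIV. \<Sum>j\<in>UNIV. v$i * X$i$j * w$j)"

lemma inner_matrix_vector_quad_form: "v \<bullet> (X *v v) = quad_form X v"
  by (simp add: quad_form_def inner_vec_def matrix_vector_mult_def sum_distrib_left mult.assoc)

lemma inner_matrix_vector_bilin_form: "w \<bullet> (X *v v) = bilin_form X w v"
  by (simp add: bilin_form_def inner_vec_def matrix_vector_mult_def sum_distrib_left mult.assoc)

lemma quad_form_bilin_form: "quad_form X v = bilin_form X v v"
  by (simp add: quad_form_def bilin_form_def)

lemma psd_cone_iff: "X \<in> psd_cone \<longleftrightarrow> transpose X = X \<and> (\<forall>v. 0 \<le> quad_form X v)"
  by (simp add: psd_cone_def inner_matrix_vector_quad_form)

lemma psd_cone_symmetric: "X \<in> psd_cone \<Longrightarrow> transpose X = X"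
  by (simp add: psd_cone_iff)

lemma bilin_form_commute: "transpose X = X \<Longrightarrow> bilin_form X v w = bilin_form X w v"
  unfolding bilin_form_def symmetric_iff_entries
  by (subst sum.swap) (simp add: mult_ac)

lemma quad_form_add_scaleR:
  assumes "transpose X = X"
  shows "quad_form X (a + t *\<^sub>R b) = quad_form X a + 2 * t * bilin_form X a b + t\<^sup>2 * quad_form X b"
proof -
  have lin: "bilin_form X v (a + t *\<^sub>R b) = bilin_form X v a + t * bilin_form X v b"
    "bilin_form X (a + t *\<^sub>R b) v = bilin_form X a v + t * bilin_form X b v" for v
    by (simp_all add: bilin_form_def algebra_simps sum.distrib sum_distrib_left)
  show ?thesis
    unfolding quad_form_bilin_form lin bilin_form_commute[OF assms, of b a]
    by (simp add: power2_eq_square algebra_simps)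
qed

lemma bilin_form_axis: "bilin_form X (axis i 1) (axis j 1) = X$i$j"
  unfolding bilin_form_def axis_def
  by (simp add: if_distrib[of "\<lambda>x. x * _"] if_distrib[of "\<lambda>x. _ * x"] cong: if_cong)

lemma bilin_form_axis_right: "bilin_form X v (axis j 1) = (\<Sum>i\<in>UNIV. v$i * X$i$j)"
  unfolding bilin_form_def axis_def
  by (simp add: if_distrib[of "\<lambda>x. x * _"] if_distrib[of "\<lambda>x. _ * x"] cong: if_cong)

lemma quad_form_add: "quad_form (X + Y) v = quad_form X v + quad_form Y v"
  by (simp add: quad_form_def algebra_simps sum.distrib)

lemma quad_form_diff: "quad_form (X - Y) v = quad_form X v - quad_form Y v"
  by (simp add: quad_form_def algebra_simps sum_subtractf)

lemma quad_form_scaleR: "quad_form (t *\<^sub>R X) v = t * quad_form X v"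
  by (simp add: quad_form_def algebra_simps sum_distrib_left)

lemma quad_form_le_norm: "\<bar>quad_form H w\<bar> \<le> norm H * (w \<bullet> w)"
proof -
  have "\<bar>quad_form H w\<bar> \<le> norm w * norm (H *v w)"
    unfolding inner_matrix_vector_quad_form[symmetric] by (rule Cauchy_Schwarz_ineq2)
  also have "\<dots> \<le> norm w * (norm H * norm w)" by (simp add: mult_left_mono norm_matrix_vector_le)
  finally show ?thesis by (simp add: power2_norm_eq_inner[symmetric] power2_eq_square mult_ac)
qed

lemma quadratic_nonneg_imp_linear_zero:
  fixes c q :: real
  assumes nonneg: "\<And>t. 0 \<le> c + 2 * t * b + t\<^sup>2 * q" and "c = 0 \<or> q = 0" "0 \<le> q"
  shows "b = 0"
proof (rule ccontr)
  assume b: "b \<noteq> 0"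
  show False
  proof (cases "q = 0")
    case True
    have "0 \<le> c + 2 * (-(c+1)/(2*b)) * b" using nonneg[of "-(c+1)/(2*b)"] True by simp
    also have "\<dots> = -1" using b by (simp add: field_simps)
    finally show False by simp
  next
    case False
    then have c0: "c = 0" and qp: "q > 0" using assms(2,3) by auto
    have "0 \<le> c + 2 * (-b/q) * b + (-b/q)\<^sup>2 * q" by (rule nonneg)
    also have "\<dots> = - b\<^sup>2 / q" using qp c0 by (simp add: field_simps power2_eq_square)
    moreover have "b\<^sup>2 / q > 0" using b qp by simp
    ultimately show False by simp
  qed
qed

lemma psd_diag_nonneg: "X \<in> psd_cone \<Longrightarrow> 0 \<le> X$i$i"
  using psd_cone_iff[of X] quad_form_bilin_form[of X "axis i 1"] bilin_form_axis[of X i i] by metis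

lemma psd_diag_zero_imp_row_zero:
  assumes X: "X \<in> psd_cone" and z: "X$i$i = 0"
  shows "X$i$j = 0"
proof -
  have s: "transpose X = X" and q: "\<And>v. 0 \<le> quad_form X v" using X psd_cone_iff by auto
  have "\<And>t. 0 \<le> X$j$j + 2 * t * X$j$i + t\<^sup>2 * X$i$i"
    using q[of "axis j 1 + _ *\<^sub>R axis i 1"] quad_form_add_scaleR[OF s, of "axis j 1" _ "axis i 1"]
    by (simp add: quad_form_bilin_form bilin_form_axis)
  then have "X$j$i = 0"
    by (rule quadratic_nonneg_imp_linear_zero) (auto simp: z)
  then show ?thesis using s symmetric_iff_entries by metis
qed

lemma psd_quad_form_zero_imp_kernel:
  assumes X: "X \<in> psd_cone" and z: "quad_form X v = 0"
  shows "X *v v = 0"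
proof -
  have s: "transpose X = X" and q: "\<And>v. 0 \<le> quad_form X v" using X psd_cone_iff by auto
  let ?w = "X *v v"
  have "\<And>t. 0 \<le> quad_form X v + 2 * t * bilin_form X v ?w + t\<^sup>2 * quad_form X ?w"
    using q quad_form_add_scaleR[OF s, of v _ ?w] by metis
  then have "bilin_form X v ?w = 0"
    by (rule quadratic_nonneg_imp_linear_zero) (auto simp: z q)
  then have "?w \<bullet> ?w = 0"
    using inner_matrix_vector_bilin_form[of ?w X v] bilin_form_commute[OF s] by simp
  then show ?thesis by simp
qed

definition outer :: "real^'n \<Rightarrow> real^'n^'n" where
  "outer v = (\<chi> i j. v$i * v$j)"

lemma quad_form_outer: "quad_form (outer c) v = (c \<bullet> v)\<^sup>2"
  by (simp add: quad_form_def outer_def inner_vec_def power2_eq_square sum_product mult_ac)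

lemma inner_outer: "outer v \<bullet> Y = quad_form Y v"
  by (simp add: inner_matrix_entries outer_def quad_form_def mult_ac)

lemma norm_outer: "norm (outer v) = v \<bullet> v"
  using inner_outer[of v "outer v"] by (simp add: quad_form_outer norm_eq_sqrt_inner)

lemma psd_add: "X \<in> psd_cone \<Longrightarrow> Y \<in> psd_cone \<Longrightarrow> X + Y \<in> psd_cone"
  by (simp add: psd_cone_iff quad_form_add transpose_def vec_eq_iff)

lemma psd_scaleR: "X \<in> psd_cone \<Longrightarrow> 0 \<le> t \<Longrightarrow> t *\<^sub>R X \<in> psd_cone"
  by (simp add: psd_cone_iff quad_form_scaleR transpose_scalar)

lemma psd_zero: "0 \<in> psd_cone"
  by (simp add: psd_cone_iff quad_form_def transpose_def vec_eq_iff)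

lemma psd_outer: "outer v \<in> psd_cone"
  unfolding psd_cone_iff quad_form_outer by (simp add: symmetric_iff_entries outer_def mult.commute)

lemma convex_psd_cone: "convex psd_cone"
  unfolding convex_def by (auto intro: psd_add psd_scaleR)

lemma closed_psd_cone: "closed (psd_cone :: (real^'n^'n) set)"
proof -
  have "psd_cone = (\<Inter>i. \<Inter>j. {X::real^'n^'n. X$i$j - X$j$i = 0}) \<inter> (\<Inter>v. {X. 0 \<le> quad_form X v})"
    by (auto simp: psd_cone_iff symmetric_iff_entries)
  note e = this
  show ?thesis unfolding e quad_form_def
    by (intro closed_Int closed_INT ballI closed_Collect_le closed_Collect_eq continuous_intros)
qed

text \<open>One step of a Cholesky factorisation: the Schur complement of a positive diagonal entry.\<close>
lemma psd_minus_outer_row: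
  assumes X: "X \<in> psd_cone" and pos: "0 < X$a$a"
  shows "X - (1 / X$a$a) *\<^sub>R outer (X$a) \<in> psd_cone"
proof -
  define x where "x = X$a$a"
  define c where "c = X$a"
  have s: "transpose X = X" and q: "\<And>v. 0 \<le> quad_form X v" using X psd_cone_iff by auto
  have cS: "c$i = X$i$a" for i using s symmetric_iff_entries c_def by metis
  have "0 \<le> quad_form (X - (1/x) *\<^sub>R outer c) v" for v
  proof -
    have b: "bilin_form X v (axis a 1) = c \<bullet> v"
      by (simp add: bilin_form_axis_right inner_vec_def cS mult.commute)
    have "0 \<le> quad_form X (v + (- ((c \<bullet> v)/x)) *\<^sub>R axis a 1)" by (rule q)
    also have "\<dots> = quad_form X v - (c \<bullet> v)\<^sup>2 / x"
      using quad_form_add_scaleR[OF s, of v "- ((c \<bullet> v)/x)" "axis a 1"] b pos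
      by (simp add: quad_form_bilin_form bilin_form_axis x_def[symmetric] field_simps power2_eq_square)
    also have "\<dots> = quad_form (X - (1/x) *\<^sub>R outer c) v"
      by (simp add: quad_form_diff quad_form_scaleR quad_form_outer)
    finally show ?thesis .
  qed
  moreover have "transpose (X - (1/x) *\<^sub>R outer c) = X - (1/x) *\<^sub>R outer c"
    using s unfolding symmetric_iff_entries by (simp add: outer_def cS c_def mult.commute)
  ultimately have "X - (1/x) *\<^sub>R outer c \<in> psd_cone" using psd_cone_iff by blast
  then show ?thesis by (simp add: x_def c_def)
qed

lemma psd_sum_outer_on:
  assumes "finite S" "X \<in> psd_cone" "\<And>i j. i \<notin> S \<Longrightarrow> X$i$j = 0"
  shows "\<exists>f. X = (\<Sum>k\<in>S. outer (f k))"
  using assms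
proof (induction S arbitrary: X rule: finite_induct)
  case empty
  then show ?case by (auto simp: vec_eq_iff)
next
  case (insert a S)
  note X = \<open>X \<in> psd_cone\<close>
  show "\<exists>f. X = (\<Sum>k\<in>insert a S. outer (f k))"
  proof (cases "X$a$a = 0")
    case True
    then have "X$i$j = 0" if "i \<notin> S" for i j
      using insert.prems(2) psd_diag_zero_imp_row_zero[OF X True, of j] that by (cases "i = a") auto
    then obtain f where f: "X = (\<Sum>k\<in>S. outer (f k))" using insert.IH X by blast
    have "(\<Sum>k\<in>S. outer ((f(a := 0)) k)) = (\<Sum>k\<in>S. outer (f k))"
      using insert.hyps by (intro sum.cong) auto
    moreover have "outer 0 = 0" by (simp add: outer_def vec_eq_iff)
    ultimately have "X = (\<Sum>k\<in>insert a S. outer ((f(a := 0)) k))"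
      using insert.hyps f by simp
    then show ?thesis by blast
  next
    case False
    define x where "x = X$a$a"
    define X' where "X' = X - (1/x) *\<^sub>R outer (X$a)"
    have xp: "x > 0" using False psd_diag_nonneg[OF X, of a] x_def by simp
    have row_col: "X$a$i = X$i$a" for i using psd_cone_symmetric[OF X] symmetric_iff_entries by metis
    have "X'$i$j = 0" if "i \<notin> S" for i j
      using that insert.prems(2)[of i] insert.prems(2)[of i a] row_col[of i] xp
      by (cases "i = a") (auto simp: X'_def outer_def x_def)
    moreover have "X' \<in> psd_cone"
      unfolding X'_def x_def by (rule psd_minus_outer_row[OF X xp[unfolded x_def]])
    ultimately obtain f where f: "X' = (\<Sum>k\<in>S. outer (f k))" using insert.IH by blast
    define g where "g = f(a := (1 / sqrt x) *\<^sub>R X$a)"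
    have "outer (g a) = (1/x) *\<^sub>R outer (X$a)"
      using xp by (simp add: g_def outer_def vec_eq_iff real_sqrt_mult[symmetric])
    moreover have "(\<Sum>k\<in>S. outer (g k)) = X'"
      unfolding f using insert.hyps by (intro sum.cong) (auto simp: g_def)
    ultimately have "X = (\<Sum>k\<in>insert a S. outer (g k))"
      using insert.hyps by (simp add: X'_def)
    then show ?thesis by blast
  qed
qed

lemma psd_sum_outer:
  fixes X :: "real^'n^'n"
  assumes "X \<in> psd_cone"
  obtains f :: "'n \<Rightarrow> real^'n" where "X = (\<Sum>k\<in>UNIV. outer (f k))"
  using psd_sum_outer_on[of UNIV X] assms by auto

lemma psd_inner_nonneg:
  fixes X Y :: "real^'n^'n"
  assumes "X \<in> psd_cone" "Y \<in> psd_cone"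
  shows "0 \<le> X \<bullet> Y"
proof -
  obtain f :: "'n \<Rightarrow> real^'n" where f: "X = (\<Sum>k\<in>UNIV. outer (f k))" by (rule psd_sum_outer[OF assms(1)])
  have "X \<bullet> Y = (\<Sum>k\<in>UNIV. quad_form Y (f k))" by (simp add: f inner_sum_left inner_outer)
  also have "\<dots> \<ge> 0" using assms(2) psd_cone_iff by (auto intro: sum_nonneg)
  finally show ?thesis .
qed

lemma psd_inner_zero_imp_mult_zero:
  fixes X Y :: "real^'n^'n"
  assumes X: "X \<in> psd_cone" and Y: "Y \<in> psd_cone" and XY: "X \<bullet> Y = 0"
  shows "X ** Y = 0"
proof -
  obtain f :: "'n \<Rightarrow> real^'n" where f: "Y = (\<Sum>k\<in>UNIV. outer (f k))" by (rule psd_sum_outer[OF Y])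
  have "(\<Sum>k\<in>UNIV. quad_form X (f k)) = 0"
    using XY by (simp add: f inner_sum_right inner_commute[of X] inner_outer)
  then have "quad_form X (f k) = 0" for k
    using X psd_cone_iff by (subst (asm) sum_nonneg_eq_0_iff) auto
  then have z: "X *v f k = 0" for k using psd_quad_form_zero_imp_kernel[OF X] by blast
  have "(X ** Y)$i$j = 0" for i j
  proof -
    have "(X ** Y)$i$j = (\<Sum>l\<in>UNIV. \<Sum>k\<in>UNIV. X$i$l * (f k $ l * f k $ j))"
      by (simp add: f outer_def matrix_matrix_mult_def sum_component sum_distrib_left)
    also have "\<dots> = (\<Sum>k\<in>UNIV. \<Sum>l\<in>UNIV. X$i$l * (f k $ l * f k $ j))"
      by (rule sum.swap)
    also have "\<dots> = (\<Sum>k\<in>UNIV. (X *v f k)$i * f k $ j)"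
      by (simp add: matrix_vector_mult_def sum_distrib_left mult_ac)
    finally show ?thesis by (simp add: z)
  qed
  then show ?thesis by (simp add: vec_eq_iff)
qed

lemma psd_norm_le_trace:
  fixes X :: "real^'n^'n"
  assumes "X \<in> psd_cone"
  shows "norm X \<le> trace X"
proof -
  obtain f :: "'n \<Rightarrow> real^'n" where f: "X = (\<Sum>k\<in>UNIV. outer (f k))" by (rule psd_sum_outer[OF assms])
  have "norm X \<le> (\<Sum>k\<in>UNIV. norm (outer (f k)))" unfolding f by (rule norm_sum)
  also have "\<dots> = (\<Sum>k\<in>UNIV. \<Sum>i\<in>UNIV. f k $ i * f k $ i)"
    by (simp add: norm_outer inner_vec_def)
  also have "\<dots> = (\<Sum>i\<in>UNIV. \<Sum>k\<in>UNIV. f k $ i * f k $ i)"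
    by (rule sum.swap)
  also have "\<dots> = trace X"
    by (simp add: f trace_def outer_def sum_component)
  finally show ?thesis .
qed

section \<open>Projection onto the positive semidefinite cone\<close>

lemma proj_psd_moreau:
  fixes Z :: "real^'n^'n"
  assumes Zs: "transpose Z = Z"
  shows "proj_psd Z \<in> psd_cone" "proj_psd Z - Z \<in> psd_cone" "proj_psd Z \<bullet> (proj_psd Z - Z) = 0"
proof -
  let ?X = "proj_psd Z"
  show X: "?X \<in> psd_cone"
    unfolding proj_psd_def using closest_point_in_set[OF closed_psd_cone] psd_zero by blast
  have d: "\<And>V. V \<in> psd_cone \<Longrightarrow> (Z - ?X) \<bullet> (V - ?X) \<le> 0"
    unfolding proj_psd_def by (rule closest_point_dot[OF convex_psd_cone closed_psd_cone])
  have "(Z - ?X) \<bullet> (0 - ?X) \<le> 0" using d[OF psd_zero] .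
  moreover have "(Z - ?X) \<bullet> (2 *\<^sub>R ?X - ?X) \<le> 0" using d[OF psd_scaleR[OF X, of 2]] by simp
  ultimately show "?X \<bullet> (?X - Z) = 0" by (simp add: inner_diff_right inner_diff_left inner_commute)
  have "quad_form (?X - Z) v \<ge> 0" for v
    using d[OF psd_add[OF X psd_outer[of v]]]
    by (simp add: inner_commute[of _ "outer v"] inner_outer quad_form_diff)
  moreover have "transpose (?X - Z) = ?X - Z"
    using psd_cone_symmetric[OF X] Zs by (simp add: transpose_def vec_eq_iff)
  ultimately show "?X - Z \<in> psd_cone" by (simp add: psd_cone_iff)
qed

lemma proj_psd_eqI:
  fixes Z X :: "real^'n^'n"
  assumes X: "X \<in> psd_cone" and Y: "X - Z \<in> psd_cone" and c: "X \<bullet> (X - Z) = 0"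
  shows "proj_psd Z = X"
proof -
  have "dist Z X \<le> dist Z V" if V: "V \<in> psd_cone" for V
  proof -
    have "0 \<le> (Z - X) \<bullet> (X - V)" using psd_inner_nonneg[OF Y V] c
      by (simp add: inner_diff_right inner_diff_left inner_commute algebra_simps)
    moreover have "(Z - V) \<bullet> (Z - V) = (Z - X) \<bullet> (Z - X) + 2 * ((Z - X) \<bullet> (X - V)) + (X - V) \<bullet> (X - V)"
      by (simp add: inner_diff_right inner_diff_left inner_commute algebra_simps)
    ultimately have "(Z - X) \<bullet> (Z - X) \<le> (Z - V) \<bullet> (Z - V)" using inner_ge_zero[of "X - V"] by linarith
    then show ?thesis by (simp add: dist_norm norm_le)
  qed
  then show ?thesis unfolding proj_psd_def
    using closest_point_unique[OF convex_psd_cone closed_psd_cone X] by metis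
qed

lemma proj_psd_nonexpansive: "norm (proj_psd Z - proj_psd W) \<le> norm (Z - W)"
  unfolding proj_psd_def
  using closest_point_lipschitz[OF convex_psd_cone closed_psd_cone, of Z W] psd_zero
  by (auto simp: dist_norm)

definition orth_conj :: "real^'n^'n \<Rightarrow> real^'n^'n \<Rightarrow> real^'n^'n" where
  "orth_conj Q X = transpose Q ** X ** Q"

lemma orth_conj_add: "orth_conj Q (X + Y) = orth_conj Q X + orth_conj Q Y"
  by (simp add: orth_conj_def matrix_add_rdistrib matrix_add_ldistrib)
lemma orth_conj_diff: "orth_conj Q (X - Y) = orth_conj Q X - orth_conj Q Y"
  by (simp add: orth_conj_def matrix_diff_rdistrib matrix_diff_ldistrib)
lemma orth_conj_scaleR: "orth_conj Q (t *\<^sub>R X) = t *\<^sub>R orth_conj Q X"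
  by (simp add: orth_conj_def matrix_scaleR_left matrix_scaleR_right)
lemma orth_conj_transpose: "orth_conj Q (transpose X) = transpose (orth_conj Q X)"
  by (simp add: orth_conj_def matrix_transpose_mul matrix_mul_assoc)

lemma orth_conj_inverse:
  assumes "orthogonal_matrix Q"
  shows "orth_conj (transpose Q) (orth_conj Q X) = X" "orth_conj Q (orth_conj (transpose Q) X) = X"
  using assms unfolding orthogonal_matrix_def orth_conj_def
  by (simp_all add: matrix_mul_assoc) (simp_all add: matrix_mul_assoc[symmetric])

lemma orth_conj_inner:
  assumes Q: "orthogonal_matrix Q"
  shows "orth_conj Q X \<bullet> orth_conj Q Y = X \<bullet> Y"
proof -
  have QQ: "Q ** transpose Q = mat 1" using Q by (simp add: orthogonal_matrix_def)
  have "orth_conj Q X \<bullet> orth_conj Q Y = trace (transpose Q ** (transpose X ** Y ** Q))"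
    by (simp add: inner_matrix_trace orth_conj_def matrix_transpose_mul matrix_mul_assoc)
       (simp add: matrix_mul_assoc[symmetric] QQ)
  also have "\<dots> = trace ((transpose X ** Y ** Q) ** transpose Q)" by (rule trace_mul_sym)
  also have "\<dots> = X \<bullet> Y"
    by (simp add: matrix_mul_assoc[symmetric] QQ inner_matrix_trace)
  finally show ?thesis .
qed

lemma norm_orth_conj: "orthogonal_matrix Q \<Longrightarrow> norm (orth_conj Q X) = norm X"
  by (simp add: norm_eq_sqrt_inner orth_conj_inner)

lemma quad_form_orth_conj: "quad_form (orth_conj Q X) v = quad_form X (Q *v v)"
proof -
  have "quad_form (orth_conj Q X) v = v \<bullet> (transpose Q *v (X *v (Q *v v)))"
    by (simp add: inner_matrix_vector_quad_form[symmetric] orth_conj_def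
          matrix_vector_mul_assoc matrix_mul_assoc)
  also have "\<dots> = (Q *v v) \<bullet> (X *v (Q *v v))"
    by (simp add: inner_commute[of v] dot_lmul_matrix inner_commute[of "X *v _"])
  finally show ?thesis by (simp add: inner_matrix_vector_quad_form)
qed

lemma orth_conj_psd: "X \<in> psd_cone \<Longrightarrow> orth_conj Q X \<in> psd_cone"
  by (simp add: psd_cone_iff quad_form_orth_conj) (metis orth_conj_transpose)

lemma orth_conj_symmetric_iff:
  "orthogonal_matrix Q \<Longrightarrow> transpose (orth_conj Q X) = orth_conj Q X \<longleftrightarrow> transpose X = X"
  by (metis orth_conj_inverse(1) orth_conj_transpose)

definition block_mat :: "'n set \<Rightarrow> 'n set \<Rightarrow> real^'n^'n \<Rightarrow> real^'n^'n" where
  "block_mat S T X = (\<chi> i j. if i \<in> S \<and> j \<in> T then X$i$j else 0)"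

definition vec_restrict :: "'n set \<Rightarrow> real^'n \<Rightarrow> real^'n" where
  "vec_restrict S v = (\<chi> i. if i \<in> S then v$i else 0)"

definition pos_idx :: "real^'n \<Rightarrow> 'n set" where
  "pos_idx l = {i. 0 < l$i}"

definition neg_idx :: "real^'n \<Rightarrow> 'n set" where
  "neg_idx l = {i. l$i < 0}"

definition off_blocks :: "real^'n \<Rightarrow> real^'n^'n \<Rightarrow> real^'n^'n" where
  "off_blocks l X = (\<chi> i j. if (0 < l$i) = (0 < l$j) then 0 else X$i$j)"

lemma block_mat_nth [simp]: "block_mat S T X $ i $ j = (if i \<in> S \<and> j \<in> T then X$i$j else 0)"
  by (simp add: block_mat_def)

lemma off_blocks_nth [simp]: "off_blocks l X $ i $ j = (if (0 < l$i) = (0 < l$j) then 0 else X$i$j)"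
  by (simp add: off_blocks_def)

lemma hadamard_nth [simp]: "hadamard M N $ i $ j = M$i$j * N$i$j"
  by (simp add: hadamard_def)

lemma norm_block_mat_le: "norm (block_mat S T X) \<le> norm X"
  by (rule norm_matrix_le_entrywise) simp

lemma norm_off_blocks_le: "norm (off_blocks l X) \<le> norm X"
  by (rule norm_matrix_le_entrywise) simp

lemma block_mat_add: "block_mat S T (X + Y) = block_mat S T X + block_mat S T Y"
  by (simp add: vec_eq_iff)

lemma off_blocks_add: "off_blocks l (X + Y) = off_blocks l X + off_blocks l Y"
  by (simp add: vec_eq_iff)

lemma off_blocks_diff: "off_blocks l (X - Y) = off_blocks l X - off_blocks l Y"
  by (simp add: vec_eq_iff)

lemma off_blocks_block_mat:
  "off_blocks l (block_mat (pos_idx l) (pos_idx l) X) = 0"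
  "off_blocks l (block_mat (neg_idx l) (neg_idx l) X) = 0"
  by (simp_all add: vec_eq_iff pos_idx_def neg_idx_def)

lemma off_blocks_diag: "off_blocks l (diag_mat l) = 0"
  by (simp add: vec_eq_iff diag_mat_def)

lemma pos_neg_idx_disjoint: "pos_idx l \<inter> neg_idx l = {}"
  by (auto simp: pos_idx_def neg_idx_def)

lemma block_decomposition:
  assumes "\<forall>i. l$i \<noteq> 0"
  shows "X = block_mat (pos_idx l) (pos_idx l) X + block_mat (neg_idx l) (neg_idx l) X + off_blocks l X"
  unfolding vec_eq_iff
proof (intro allI)
  fix i j
  show "X$i$j = (block_mat (pos_idx l) (pos_idx l) X + block_mat (neg_idx l) (neg_idx l) X
      + off_blocks l X)$i$j"
    using assms[rule_format, of i] assms[rule_format, of j]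
    by (auto simp: pos_idx_def neg_idx_def linorder_neq_iff)
qed

lemma inner_block_decomposition:
  assumes "\<forall>i. l$i \<noteq> 0"
  shows "X \<bullet> Y = block_mat (pos_idx l) (pos_idx l) X \<bullet> block_mat (pos_idx l) (pos_idx l) Y
     + block_mat (neg_idx l) (neg_idx l) X \<bullet> block_mat (neg_idx l) (neg_idx l) Y
     + off_blocks l X \<bullet> off_blocks l Y"
proof -
  have "X$i$j * Y$i$j = block_mat (pos_idx l) (pos_idx l) X$i$j * block_mat (pos_idx l) (pos_idx l) Y$i$j
     + block_mat (neg_idx l) (neg_idx l) X$i$j * block_mat (neg_idx l) (neg_idx l) Y$i$j
     + off_blocks l X$i$j * off_blocks l Y$i$j" for i j
    using assms[rule_format, of i] assms[rule_format, of j]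
    by (auto simp: pos_idx_def neg_idx_def linorder_neq_iff)
  then show ?thesis unfolding inner_matrix_entries by (simp add: sum.distrib)
qed

lemma block_inner_disjoint: "S \<inter> T = {} \<Longrightarrow> block_mat S S X \<bullet> block_mat T T Y = 0"
  unfolding inner_matrix_entries by (auto intro!: sum.neutral)

lemma block_mult_disjoint: "S \<inter> T = {} \<Longrightarrow> block_mat S S X ** block_mat T T Y = 0"
  unfolding matrix_matrix_mult_def vec_eq_iff by (auto intro!: sum.neutral)

lemma block_diag_mult:
  "(block_mat S S (diag_mat l) ** B)$i$j = (if i \<in> S then l$i * B$i$j else 0)"
proof -
  have "(block_mat S S (diag_mat l) ** B)$i$j = (\<Sum>k\<in>UNIV. block_mat S S (diag_mat l) $i$k * B$k$j)"
    by (simp add: matrix_matrix_mult_def)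
  also have "\<dots> = (\<Sum>k\<in>UNIV. if k = i then (if i \<in> S then l$i * B$i$j else 0) else 0)"
    by (intro sum.cong) (auto simp: diag_mat_def)
  finally show ?thesis by simp
qed

lemma mult_block_diag:
  "(B ** block_mat S S (diag_mat l))$i$j = (if j \<in> S then B$i$j * l$j else 0)"
proof -
  have "(B ** block_mat S S (diag_mat l))$i$j = (\<Sum>k\<in>UNIV. B$i$k * block_mat S S (diag_mat l) $k$j)"
    by (simp add: matrix_matrix_mult_def)
  also have "\<dots> = (\<Sum>k\<in>UNIV. if k = j then (if j \<in> S then B$i$j * l$j else 0) else 0)"
    by (intro sum.cong) (auto simp: diag_mat_def)
  finally show ?thesis by simp
qed

lemma quad_form_block_mat: "quad_form (block_mat S S X) v = quad_form X (vec_restrict S v)"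
  unfolding quad_form_def vec_restrict_def by (intro sum.cong refl) auto

lemma block_mat_psd: "X \<in> psd_cone \<Longrightarrow> block_mat S S X \<in> psd_cone"
  by (simp add: psd_cone_iff quad_form_block_mat symmetric_iff_entries)

lemma quad_form_diag: "quad_form (diag_mat l) w = (\<Sum>i\<in>UNIV. l$i * (w$i)\<^sup>2)"
proof -
  have "(\<Sum>j\<in>UNIV. w$i * (if i = j then l$i else 0) * w$j) = l$i * (w$i)\<^sup>2" for i
  proof -
    have "(\<Sum>j\<in>UNIV. w$i * (if i = j then l$i else 0) * w$j)
        = (\<Sum>j\<in>UNIV. if j = i then l$i * (w$i)\<^sup>2 else 0)"
      by (intro sum.cong) (auto simp: power2_eq_square)
    then show ?thesis by simp
  qed
  then show ?thesis unfolding quad_form_def diag_mat_def by simp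
qed

lemma trace_block_mat: "trace (block_mat S S X) = block_mat S S X \<bullet> block_mat S S (mat 1)"
proof -
  have "(\<Sum>j\<in>UNIV. if i\<in>S \<and> j\<in>S then if i = j then X$j$j else 0 else 0)
      = (\<Sum>j\<in>UNIV. if j = i then (if i \<in> S then X$i$i else 0) else 0)" for i
    by (intro sum.cong) auto
  then show ?thesis
    unfolding inner_matrix_entries trace_def
    by (simp add: mat_def if_distrib[of "\<lambda>x. _ * x"] cong: if_cong)
qed

lemma psd_block_inner_ge:
  fixes X G :: "real^'n^'n"
  assumes X: "X \<in> psd_cone" and G: "G \<in> psd_cone" and c: "0 \<le> c"
  shows "c * norm (block_mat S S X)
    \<le> block_mat S S X \<bullet> (block_mat S S X + G + c *\<^sub>R block_mat S S (mat 1))"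
proof -
  have XS: "block_mat S S X \<in> psd_cone" using block_mat_psd[OF X] .
  have "c * norm (block_mat S S X) \<le> c * trace (block_mat S S X)"
    using psd_norm_le_trace[OF XS] c by (simp add: mult_left_mono)
  also have "\<dots> = block_mat S S X \<bullet> (c *\<^sub>R block_mat S S (mat 1))" by (simp add: trace_block_mat)
  also have "\<dots> \<le> block_mat S S X \<bullet> (block_mat S S X + G + c *\<^sub>R block_mat S S (mat 1))"
    using psd_inner_nonneg[OF XS G] by (simp add: inner_add_right)
  finally show ?thesis .
qed

lemma block_diag_perturbation_psd:
  fixes l :: "real^'n" and K :: "real^'n^'n"
  assumes S: "\<forall>i\<in>S. \<mu> \<le> l$i" and Ks: "transpose K = K" and Kn: "norm K \<le> \<mu> - c"
  shows "block_mat S S (diag_mat l + K) - c *\<^sub>R block_mat S S (mat 1) \<in> psd_cone"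
proof -
  have "0 \<le> quad_form (block_mat S S (diag_mat l + K) - c *\<^sub>R block_mat S S (mat 1)) v" for v
  proof -
    define w where "w = vec_restrict S v"
    define s where "s = (\<Sum>i\<in>UNIV. (w$i)\<^sup>2)"
    have "\<mu> * s \<le> quad_form (diag_mat l) w"
      unfolding quad_form_diag s_def sum_distrib_left
      using S by (intro sum_mono) (auto simp: w_def vec_restrict_def mult_right_mono)
    moreover have "- (norm K * s) \<le> quad_form K w"
      using quad_form_le_norm[of K w] by (simp add: s_def inner_vec_def power2_eq_square abs_le_iff)
    moreover have "quad_form (mat 1) w = s"
      by (simp add: quad_form_def s_def mat_def power2_eq_square if_distrib[of "\<lambda>x. x * _"]
            if_distrib[of "\<lambda>x. _ * x"] cong: if_cong)
    moreover have "0 \<le> (\<mu> - norm K - c) * s"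
      using Kn by (intro mult_nonneg_nonneg) (auto simp: s_def intro: sum_nonneg)
    ultimately show ?thesis
      by (simp add: quad_form_diff quad_form_scaleR quad_form_block_mat quad_form_add
            w_def[symmetric] algebra_simps)
  qed
  moreover have "transpose (block_mat S S (diag_mat l + K) - c *\<^sub>R block_mat S S (mat 1))
      = block_mat S S (diag_mat l + K) - c *\<^sub>R block_mat S S (mat 1)"
    using Ks unfolding symmetric_iff_entries by (auto simp: diag_mat_def mat_def)
  ultimately show ?thesis using psd_cone_iff by blast
qed

section \<open>The orthogonal projector onto the range of the adjoint\<close>

lemma opA_add: "opA A (X + Y) = opA A X + opA A Y"
  by (simp add: opA_def vec_eq_iff linear_add[OF linear_frob])
lemma opA_scaleR: "opA A (c *\<^sub>R X) = c *\<^sub>R opA A X"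
  by (simp add: opA_def vec_eq_iff linear_scale[OF linear_frob])

lemma linear_projP: "linear (projP A)"
  by (intro linearI)
     (simp_all add: projP_def opA_add opA_scaleR opAadj_def scaleR_add_left sum.distrib
        scaleR_sum_right matrix_vector_right_distrib matrix_vector_mult_scaleR)

lemma opAadj_symmetric:
  assumes "\<forall>i. A i \<in> sym_mats"
  shows "transpose (opAadj A y) = opAadj A y"
  using assms by (simp add: sym_mats_def opAadj_def symmetric_iff_entries sum_component)

lemma projP_symmetric: "\<forall>i. A i \<in> sym_mats \<Longrightarrow> transpose (projP A X) = projP A X"
  by (simp add: projP_def opAadj_symmetric)

lemma inner_opAadj:
  assumes "\<forall>i. A i \<in> sym_mats"
  shows "opAadj A y \<bullet> X = y \<bullet> opA A X"
proof -
  have "transpose (A i) = A i" for i using assms by (simp add: sym_mats_def)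
  then show ?thesis
    by (simp add: opAadj_def inner_sum_left opA_def inner_vec_def[of y] frob_eq_inner)
qed

lemma gramA_mult: "gramA A *v y = opA A (opAadj A y)"
proof -
  have "frob (A i) (\<Sum>j\<in>UNIV. y$j *\<^sub>R A j) = (\<Sum>j\<in>UNIV. frob (A i) (y$j *\<^sub>R A j))" for i
    by (rule linear_sum[OF linear_frob])
  then show ?thesis
    by (simp add: vec_eq_iff gramA_def opA_def opAadj_def matrix_vector_mult_def
        linear_scale[OF linear_frob] mult.commute)
qed

locale surjective_constraints =
  fixes A :: "'m::finite \<Rightarrow> real^'n^'n"
  assumes A_sym: "\<forall>i. A i \<in> sym_mats"
    and A_surj: "\<forall>v. \<exists>X \<in> sym_mats. opA A X = v"
begin

lemma gramA_inverse: "matrix_inv (gramA A) ** gramA A = mat 1" "gramA A ** matrix_inv (gramA A) = mat 1"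
proof -
  have "y = 0" if "gramA A *v y = 0" for y
  proof -
    have "opAadj A y \<bullet> opAadj A y = 0"
      using that by (simp add: inner_opAadj[OF A_sym] gramA_mult)
    moreover obtain X where "opA A X = y" using A_surj by blast
    ultimately show "y = 0" using inner_opAadj[OF A_sym, of y X] by simp
  qed
  then have "invertible (gramA A)"
    using matrix_left_invertible_ker invertible_left_inverse by blast
  then have "\<exists>B. gramA A ** B = mat 1 \<and> B ** gramA A = mat 1" by (simp add: invertible_def)
  then have "gramA A ** matrix_inv (gramA A) = mat 1 \<and> matrix_inv (gramA A) ** gramA A = mat 1"
    unfolding matrix_inv_def by (rule someI_ex)
  then show "matrix_inv (gramA A) ** gramA A = mat 1" "gramA A ** matrix_inv (gramA A) = mat 1"
    by simp_all
qed

lemma matrix_inv_gramA_symmetric: "transpose (matrix_inv (gramA A)) = matrix_inv (gramA A)"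
proof -
  let ?G = "gramA A" and ?I = "matrix_inv (gramA A)"
  have "transpose ?G = ?G"
    using A_sym by (simp add: gramA_def symmetric_iff_entries frob_eq_inner sym_mats_def inner_commute)
  then have "transpose ?I ** ?G = mat 1"
    using gramA_inverse(2) by (metis matrix_transpose_mul transpose_mat)
  then have "transpose ?I = transpose ?I ** (?G ** ?I)" "transpose ?I ** ?G ** ?I = ?I"
    using gramA_inverse(2) by simp_all
  then show ?thesis by (simp add: matrix_mul_assoc)
qed

lemma projP_opAadj: "projP A (opAadj A y) = opAadj A y"
  using gramA_inverse by (simp add: projP_def gramA_mult[symmetric] matrix_vector_mul_assoc)

lemma projP_idem: "projP A (projP A X) = projP A X"
  by (metis projP_def projP_opAadj)

lemma projP_self_adjoint: "projP A X \<bullet> Y = X \<bullet> projP A Y"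
proof -
  let ?I = "matrix_inv (gramA A)"
  have "(?I *v a) \<bullet> b = a \<bullet> (?I *v b)" for a b
  proof -
    have "?I *v a = a v* ?I" by (metis matrix_inv_gramA_symmetric transpose_matrix_vector)
    then show ?thesis by (simp add: dot_lmul_matrix)
  qed
  then have "projP A X \<bullet> Y = opA A X \<bullet> (?I *v opA A Y)"
    by (simp add: projP_def inner_opAadj[OF A_sym])
  also have "\<dots> = (?I *v opA A Y) \<bullet> opA A X" by (rule inner_commute)
  also have "\<dots> = projP A Y \<bullet> X" by (simp add: projP_def inner_opAadj[OF A_sym])
  finally show ?thesis by (simp add: inner_commute)
qed

lemma norm_reflect_projP: "norm (X - 2 *\<^sub>R projP A X) = norm X"
proof -
  have "projP A X \<bullet> projP A X = X \<bullet> projP A X"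
    using projP_self_adjoint[of X "projP A X"] by (simp add: projP_idem)
  then have "(X - 2 *\<^sub>R projP A X) \<bullet> (X - 2 *\<^sub>R projP A X) = X \<bullet> X"
    by (simp add: inner_diff_left inner_diff_right inner_commute[of "projP A X" X])
  then show ?thesis by (simp add: norm_eq_sqrt_inner)
qed

end

section \<open>The linearised ADMM operator\<close>

lemma Omega_symmetric: "Omega l $ i $ j = Omega l $ j $ i"
  unfolding Omega_def by (cases "0 < l$i"; cases "0 < l$j"; cases "l$i < 0"; cases "l$j < 0"; simp)

lemma Omega_bounds: "0 \<le> Omega l $ i $ j" "Omega l $ i $ j \<le> 1"
  unfolding Omega_def
  by (cases "0 < l$i"; cases "0 < l$j"; cases "l$i < 0"; cases "l$j < 0"; simp add: divide_le_eq_1)+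

lemma Omega_off_blocks_strict:
  "0 < l$i \<Longrightarrow> l$j < 0 \<Longrightarrow> 0 < Omega l $ i $ j \<and> Omega l $ i $ j < 1"
  unfolding Omega_def by (simp add: divide_less_eq_1)

lemma hadamard_Omega_block_diagonal:
  assumes nz: "\<forall>i. l$i \<noteq> 0" and H: "off_blocks l H = 0"
  shows "hadamard (Omega l) H = block_mat (pos_idx l) (pos_idx l) H"
  unfolding vec_eq_iff
proof (intro allI)
  fix i j
  have "H$i$j = 0" if "(0 < l$i) \<noteq> (0 < l$j)"
    using H that by (metis off_blocks_nth zero_index)
  then show "hadamard (Omega l) H $ i $ j = block_mat (pos_idx l) (pos_idx l) H $ i $ j"
    using nz[rule_format, of i] nz[rule_format, of j]
    by (auto simp: Omega_def pos_idx_def linorder_neq_iff)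
qed

lemma opD_orth_conj: "opD Q l H = orth_conj (transpose Q) (hadamard (Omega l) (orth_conj Q H))"
  by (simp add: opD_def orth_conj_def matrix_mul_assoc)

lemma linear_opD: "linear (opD Q l)"
proof -
  have "opD Q l = orth_conj (transpose Q) \<circ> hadamard (Omega l) \<circ> orth_conj Q"
    by (simp add: fun_eq_iff opD_orth_conj)
  moreover have "linear (orth_conj P)" for P :: "real^'n^'n"
    by (intro linearI) (simp_all add: orth_conj_add orth_conj_scaleR)
  moreover have "linear (hadamard (Omega l))"
    by (intro linearI) (simp_all add: vec_eq_iff algebra_simps)
  ultimately show ?thesis by (metis linear_compose)
qed

lemma linear_opM: "linear (opM A Q l)"
  unfolding opM_def
  by (intro linear_compose_add linear_compose_sub linear_compose[unfolded o_def, OF _ linear_projP]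
      linear_opD linear_ident)

lemma fix_sym_subset: "fix_sym L \<subseteq> sym_mats"
  by (auto simp: fix_sym_def)

lemma subspace_fix_sym:
  assumes "linear L"
  shows "subspace (fix_sym L)"
  using subspace_sym_mats linear_0[OF assms] linear_add[OF assms] linear_scale[OF assms]
  unfolding subspace_def fix_sym_def by auto

lemma (in surjective_constraints) opM_fixed_point_orthogonal:
  assumes "opM A Q l H = H"
  shows "opD Q l H \<bullet> (H - opD Q l H) = 0"
proof -
  define a where "a = opD Q l H"
  define b where "b = H - a"
  have e: "projP A b - projP A a = b" using assms by (simp add: opM_def a_def b_def algebra_simps)
  then have "projP A (projP A b - projP A a) = projP A b" by simp
  then have Pa: "projP A a = 0" by (simp add: linear_diff[OF linear_projP] projP_idem)
  then have Pb: "projP A b = b" using e by simp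
  show ?thesis using projP_self_adjoint[of a b] Pa Pb by (simp add: a_def b_def)
qed

text \<open>In the eigenbasis the orthogonality above reads \<open>\<Sum> \<Omega>(1 - \<Omega>) H\<^sup>2 = 0\<close>, and
  \<open>0 < \<Omega> < 1\<close> exactly on the off-diagonal blocks.\<close>
lemma (in surjective_constraints) opM_fixed_point_block_diagonal:
  assumes Q: "orthogonal_matrix Q" and nz: "\<forall>i. l$i \<noteq> 0"
    and fx: "opM A Q l H = H"
  shows "off_blocks l (orth_conj Q H) = 0"
proof -
  define H' where "H' = orth_conj Q H"
  have D: "orth_conj Q (opD Q l H) = hadamard (Omega l) H'"
    by (simp add: opD_orth_conj orth_conj_inverse(2)[OF Q] H'_def)
  have "orth_conj Q (opD Q l H) \<bullet> orth_conj Q (H - opD Q l H) = 0"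
    using opM_fixed_point_orthogonal[OF fx] orth_conj_inner[OF Q] by simp
  then have "hadamard (Omega l) H' \<bullet> (H' - hadamard (Omega l) H') = 0"
    by (simp add: orth_conj_diff D H'_def)
  then have z: "(\<Sum>i\<in>UNIV. \<Sum>j\<in>UNIV. Omega l $i$j * (1 - Omega l $i$j) * (H'$i$j)\<^sup>2) = 0"
    unfolding inner_matrix_entries by (simp add: algebra_simps power2_eq_square)
  have nn: "0 \<le> Omega l $i$j * (1 - Omega l $i$j) * (H'$i$j)\<^sup>2" for i j
    using Omega_bounds[of l i j] by simp
  have zz: "Omega l $i$j * (1 - Omega l $i$j) * (H'$i$j)\<^sup>2 = 0" for i j
    using z nn by (simp add: sum_nonneg_eq_0_iff sum_nonneg)
  show ?thesis unfolding vec_eq_iff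
  proof (intro allI)
    fix i j
    show "off_blocks l (orth_conj Q H) $ i $ j = 0 $ i $ j"
    proof (cases "(0 < l$i) = (0 < l$j)")
      case False
      then have "0 < Omega l $i$j \<and> Omega l $i$j < 1"
        using nz Omega_off_blocks_strict[of l i j] Omega_off_blocks_strict[of l j i]
          Omega_symmetric[of l i j]
        by (metis linorder_neqE_linordered_idom)
      then show ?thesis using zz[of i j] False by (simp add: H'_def)
    qed simp
  qed
qed

section \<open>Second-order expansion of the projection onto the PSD cone\<close>

text \<open>Read in the eigenbasis of \<open>Z\<^sub>\<star>\<close>: \<open>X = \<Pi>(Z)\<close> and \<open>Y = \<Pi>(Z) - Z\<close> for \<open>Z = diag l + H + E\<close> with \<open>H\<close>
  block diagonal, and \<open>block_mat P P (diag l + H)\<close> is \<open>\<Pi>(diag l + H)\<close>.\<close>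
locale perturbed_complementarity =
  fixes l :: "real^'n" and \<mu> :: real and X Y H E :: "real^'n^'n"
  assumes l_nonzero: "\<forall>i. l$i \<noteq> 0"
    and gap: "0 < \<mu>" "\<forall>i. \<mu> \<le> \<bar>l$i\<bar>"
    and H_sym: "transpose H = H" and H_block_diagonal: "off_blocks l H = 0"
    and E_sym: "transpose E = E"
    and X_psd: "X \<in> psd_cone" and Y_psd: "Y \<in> psd_cone" and complementary: "X \<bullet> Y = 0"
    and decomp: "X - Y = diag_mat l + H + E"
    and near: "norm (X - block_mat (pos_idx l) (pos_idx l) (diag_mat l + H)) \<le> norm E"
    and small: "norm H + norm E \<le> \<mu>/2"
begin

abbreviation "P \<equiv> pos_idx l"
abbreviation "N \<equiv> neg_idx l"

definition "X0 = block_mat P P (diag_mat l + H)"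
definition "Y0 = block_mat N N (diag_mat l + H)"
definition "\<Delta> = X - X0"
definition "R = X - X0 - hadamard (Omega l) E"
definition "cross = \<Delta> ** block_mat N N H - block_mat P P H ** (\<Delta> - E) - \<Delta> ** (\<Delta> - E)"

lemma in_P: "i \<in> P \<longleftrightarrow> 0 < l$i" and in_N: "i \<in> N \<longleftrightarrow> l$i < 0"
  by (simp_all add: pos_idx_def neg_idx_def)

lemma P_or_N: "i \<notin> P \<Longrightarrow> i \<in> N"
  using l_nonzero by (auto simp: in_P in_N linorder_neq_iff)

lemma Y_eq: "Y = \<Delta> - E - Y0"
proof -
  have "off_blocks l (diag_mat l + H) = 0" using H_block_diagonal by (simp add: off_blocks_add off_blocks_diag)
  then have D: "diag_mat l + H = X0 + Y0"
    using block_decomposition[OF l_nonzero, of "diag_mat l + H"] by (simp add: X0_def Y0_def)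
  from decomp have "Y = X - (diag_mat l + H) - E" by (simp add: algebra_simps)
  also have "\<dots> = \<Delta> - E - Y0" unfolding D \<Delta>_def by (simp add: algebra_simps)
  finally show ?thesis .
qed

lemma norm_\<Delta>: "norm \<Delta> \<le> norm E"
  using near by (simp add: \<Delta>_def X0_def)

lemma norm_off_blocks_X: "norm (off_blocks l X) \<le> norm E"
proof -
  have "off_blocks l X = off_blocks l \<Delta>" by (simp add: \<Delta>_def off_blocks_diff X0_def off_blocks_block_mat)
  then show ?thesis using norm_off_blocks_le[of l \<Delta>] norm_\<Delta> by simp
qed

lemma norm_off_blocks_Y: "norm (off_blocks l Y) \<le> 2 * norm E"
proof -
  have "off_blocks l Y = off_blocks l (\<Delta> - E)"
    by (simp add: Y_eq off_blocks_diff Y0_def off_blocks_block_mat)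
  then have "norm (off_blocks l Y) \<le> norm \<Delta> + norm E"
    using norm_off_blocks_le[of l "\<Delta> - E"] norm_triangle_ineq4[of \<Delta> E] by simp
  then show ?thesis using norm_\<Delta> by simp
qed

text \<open>Complementarity couples the diagonal blocks, which are PSD with margin \<open>\<mu>/2\<close>, to the
  off-diagonal blocks, which are \<open>O(\<parallel>E\<parallel>)\<close>.\<close>
lemma diagonal_blocks_bound:
  "norm (block_mat P P Y) + norm (block_mat N N X) \<le> 4 / \<mu> * (norm E)\<^sup>2"
proof -
  define c where "c = \<mu>/2"
  have c0: "0 \<le> c" using gap by (simp add: c_def)
  have "norm (H + E) \<le> \<mu> - c"
    using small norm_triangle_ineq[of H E] by (simp add: c_def)
  then have HE: "norm (H + E) \<le> \<mu> - c" "norm (-(H + E)) \<le> \<mu> - c"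
    by (simp_all only: norm_minus_cancel)
  have sym: "transpose (H + E) = H + E" "transpose (-(H + E)) = -(H + E)"
    using H_sym E_sym by (simp_all add: symmetric_iff_entries)
  have "\<mu> \<le> l$i" if "i \<in> P" for i using gap(2)[rule_format, of i] that by (simp add: in_P)
  moreover have "\<mu> \<le> (-l)$i" if "i \<in> N" for i using gap(2)[rule_format, of i] that by (simp add: in_N)
  ultimately have GP: "block_mat P P (diag_mat l + (H + E)) - c *\<^sub>R block_mat P P (mat 1) \<in> psd_cone"
    and GN: "block_mat N N (diag_mat (-l) + (-(H + E))) - c *\<^sub>R block_mat N N (mat 1) \<in> psd_cone"
    using block_diag_perturbation_psd HE sym by blast+
  have "block_mat P P X = block_mat P P Y
      + (block_mat P P (diag_mat l + (H + E)) - c *\<^sub>R block_mat P P (mat 1)) + c *\<^sub>R block_mat P P (mat 1)"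
    "block_mat N N Y = block_mat N N X
      + (block_mat N N (diag_mat (-l) + (-(H + E))) - c *\<^sub>R block_mat N N (mat 1)) + c *\<^sub>R block_mat N N (mat 1)"
    using decomp by (simp_all add: vec_eq_iff diag_mat_def algebra_simps)
  then have bP: "c * norm (block_mat P P Y) \<le> block_mat P P X \<bullet> block_mat P P Y"
    and bN: "c * norm (block_mat N N X) \<le> block_mat N N X \<bullet> block_mat N N Y"
    using psd_block_inner_ge[OF Y_psd GP c0, of P] psd_block_inner_ge[OF X_psd GN c0, of N]
    by (simp_all add: inner_commute[of _ "block_mat P P Y"])
  have "0 = block_mat P P X \<bullet> block_mat P P Y + block_mat N N X \<bullet> block_mat N N Y
      + off_blocks l X \<bullet> off_blocks l Y"
    using inner_block_decomposition[OF l_nonzero, of X Y] complementary by simp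
  moreover have "- (off_blocks l X \<bullet> off_blocks l Y) \<le> norm E * (2 * norm E)"
    using Cauchy_Schwarz_ineq2[of "off_blocks l X" "off_blocks l Y"]
      mult_mono[OF norm_off_blocks_X norm_off_blocks_Y] by simp
  ultimately have "c * (norm (block_mat P P Y) + norm (block_mat N N X)) \<le> 2 * (norm E)\<^sup>2"
    using bN bP by (simp add: algebra_simps power2_eq_square)
  then show ?thesis using gap by (simp add: c_def field_simps)
qed

text \<open>The \<open>(i, j)\<close> entry of \<open>XY = 0\<close> with \<open>i \<in> P\<close>, \<open>j \<in> N\<close>, expanded around \<open>X0\<close> and \<open>Y0\<close>.\<close>
lemma cross_entry:
  assumes ij: "i \<in> P" "j \<in> N"
  shows "l$i * (\<Delta>$i$j - E$i$j) - \<Delta>$i$j * l$j = cross$i$j"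
proof -
  have "X ** Y = (X0 + \<Delta>) ** ((\<Delta> - E) - Y0)" using Y_eq by (simp add: \<Delta>_def)
  then have "X ** Y = X0 ** (\<Delta> - E) - X0 ** Y0 + \<Delta> ** (\<Delta> - E) - \<Delta> ** Y0"
    by (simp only: matrix_add_rdistrib matrix_diff_ldistrib) (simp add: algebra_simps)
  moreover have "X ** Y = 0" by (rule psd_inner_zero_imp_mult_zero[OF X_psd Y_psd complementary])
  moreover have "X0 ** Y0 = 0"
    unfolding X0_def Y0_def by (rule block_mult_disjoint[OF pos_neg_idx_disjoint])
  ultimately have "0 = (X0 ** (\<Delta> - E))$i$j + (\<Delta> ** (\<Delta> - E))$i$j - (\<Delta> ** Y0)$i$j"
    by (metis diff_zero vector_minus_component vector_add_component zero_index)
  moreover have "(X0 ** (\<Delta> - E))$i$j = l$i * (\<Delta>$i$j - E$i$j) + (block_mat P P H ** (\<Delta> - E))$i$j"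
    using ij by (simp add: X0_def block_mat_add matrix_add_rdistrib block_diag_mult)
  moreover have "(\<Delta> ** Y0)$i$j = \<Delta>$i$j * l$j + (\<Delta> ** block_mat N N H)$i$j"
    using ij by (simp add: Y0_def block_mat_add matrix_add_ldistrib mult_block_diag)
  ultimately show ?thesis by (simp add: cross_def algebra_simps)
qed

lemma norm_cross: "norm cross \<le> 3 * norm E * norm H + 2 * (norm E)\<^sup>2"
proof -
  have nDE: "norm (\<Delta> - E) \<le> 2 * norm E"
    using norm_triangle_ineq4[of \<Delta> E] norm_\<Delta> by simp
  have "norm cross \<le> norm (\<Delta> ** block_mat N N H) + norm (block_mat P P H ** (\<Delta> - E))
      + norm (\<Delta> ** (\<Delta> - E))"
    unfolding cross_def by (rule order_trans[OF norm_triangle_ineq4], simp add: norm_triangle_ineq4)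
  also have "\<dots> \<le> norm \<Delta> * norm (block_mat N N H) + norm (block_mat P P H) * norm (\<Delta> - E)
      + norm \<Delta> * norm (\<Delta> - E)"
    by (intro add_mono norm_matrix_mult_le)
  also have "\<dots> \<le> norm E * norm H + norm H * (2 * norm E) + norm E * (2 * norm E)"
    by (intro add_mono mult_mono norm_\<Delta> norm_block_mat_le nDE) simp_all
  finally show ?thesis by (simp add: algebra_simps power2_eq_square)
qed

lemma R_off_blocks_entry:
  assumes ij: "i \<in> P" "j \<in> N"
  shows "\<bar>R$i$j\<bar> \<le> \<bar>cross$i$j\<bar> / \<mu>"
proof -
  have gap_ij: "\<mu> \<le> l$i - l$j" using gap(2)[rule_format, of i] ij by (simp add: in_P in_N)
  have "R$i$j = X$i$j - l$i / (l$i - l$j) * E$i$j" "\<Delta>$i$j = X$i$j"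
    using ij by (simp_all add: R_def X0_def \<Delta>_def Omega_def in_P in_N)
  then have "R$i$j = cross$i$j / (l$i - l$j)"
    using cross_entry[OF ij] gap gap_ij by (simp add: field_simps)
  then show ?thesis using gap gap_ij by (simp add: frac_le)
qed

lemma R_sym: "transpose R = R"
  using psd_cone_symmetric[OF X_psd] H_sym E_sym Omega_symmetric[of l]
  by (simp add: R_def X0_def symmetric_iff_entries diag_mat_def)

lemma norm_R_off_blocks: "norm (off_blocks l R) \<le> 2 / \<mu> * norm cross"
proof -
  define C where "C = block_mat P N cross + transpose (block_mat P N cross)"
  have "norm (off_blocks l R) \<le> norm ((1/\<mu>) *\<^sub>R C)"
  proof (rule norm_matrix_le_entrywise)
    fix i j
    have C: "C$i$j = (if i \<in> P \<and> j \<in> N then cross$i$j else if j \<in> P \<and> i \<in> N then cross$j$i else 0)"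
      using pos_neg_idx_disjoint by (auto simp: C_def transpose_def)
    have "\<bar>off_blocks l R $ i $ j\<bar> \<le> \<bar>C$i$j\<bar> / \<mu>" if "i \<in> P" "j \<notin> P"
      using that R_off_blocks_entry[of i j] P_or_N[of j] by (simp add: C in_P)
    moreover have "\<bar>off_blocks l R $ i $ j\<bar> \<le> \<bar>C$i$j\<bar> / \<mu>" if "i \<notin> P" "j \<in> P"
      using that R_off_blocks_entry[of j i] P_or_N[of i] R_sym symmetric_iff_entries[of R]
      by (simp add: C in_P)
    ultimately show "\<bar>off_blocks l R $ i $ j\<bar> \<le> \<bar>((1/\<mu>) *\<^sub>R C) $ i $ j\<bar>"
      using gap by (cases "i \<in> P"; cases "j \<in> P") (auto simp: in_P abs_mult divide_inverse mult.commute)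
  qed
  also have "\<dots> \<le> (1/\<mu>) * (norm cross + norm cross)"
    using gap norm_triangle_ineq[of "block_mat P N cross" "transpose (block_mat P N cross)"]
      norm_block_mat_le[of P N cross]
    by (simp add: C_def norm_transpose_matrix divide_right_mono)
  finally show ?thesis by simp
qed

theorem second_order_bound:
  "norm (X - block_mat P P (diag_mat l + H) - hadamard (Omega l) E) \<le> 8/\<mu> * norm E * (norm E + norm H)"
proof -
  have "Y = X - diag_mat l - H - E" using decomp by (simp add: algebra_simps)
  then have "block_mat P P R = block_mat P P Y" "block_mat N N R = block_mat N N X"
    by (simp_all add: vec_eq_iff R_def X0_def Omega_def in_P in_N)
  moreover have "norm R \<le> norm (block_mat P P R) + norm (block_mat N N R) + norm (off_blocks l R)"
    using block_decomposition[OF l_nonzero, of R]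
      norm_triangle_ineq[of "block_mat P P R + block_mat N N R" "off_blocks l R"]
      norm_triangle_ineq[of "block_mat P P R" "block_mat N N R"] by simp
  ultimately have "norm R \<le> 4 / \<mu> * (norm E)\<^sup>2 + 2 / \<mu> * (3 * norm E * norm H + 2 * (norm E)\<^sup>2)"
    using diagonal_blocks_bound norm_R_off_blocks
      mult_left_mono[OF norm_cross, of "2/\<mu>"] gap by simp
  also have "\<dots> \<le> 8/\<mu> * norm E * (norm E + norm H)"
    using gap by (simp add: field_simps power2_eq_square)
  finally show ?thesis by (simp add: R_def X0_def)
qed

end

section \<open>The ADMM map near a strictly complementary solution\<close>

lemma proj_psd_block_diagonal:
  fixes l :: "real^'n" and H :: "real^'n^'n"
  assumes Q: "orthogonal_matrix Q" and nz: "\<forall>i. l$i \<noteq> 0"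
    and gap: "\<forall>i. \<mu> \<le> \<bar>l$i\<bar>"
    and H_sym: "transpose H = H" and H_blocks: "off_blocks l H = 0" and H_small: "norm H \<le> \<mu>"
  shows "proj_psd (orth_conj (transpose Q) (diag_mat l + H))
    = orth_conj (transpose Q) (block_mat (pos_idx l) (pos_idx l) (diag_mat l + H))"
proof -
  define X where "X = block_mat (pos_idx l) (pos_idx l) (diag_mat l + H)"
  define Y where "Y = block_mat (neg_idx l) (neg_idx l) (diag_mat (-l) + (-H))"
  have "\<mu> \<le> l$i" if "i \<in> pos_idx l" for i using gap[rule_format, of i] that by (simp add: pos_idx_def)
  then have "X - 0 *\<^sub>R block_mat (pos_idx l) (pos_idx l) (mat 1) \<in> psd_cone"
    unfolding X_def using H_sym H_small by (intro block_diag_perturbation_psd) auto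
  then have X: "X \<in> psd_cone" by simp
  have "\<mu> \<le> (-l)$i" if "i \<in> neg_idx l" for i using gap[rule_format, of i] that by (simp add: neg_idx_def)
  moreover have "transpose (-H) = -H" using H_sym by (simp add: symmetric_iff_entries)
  ultimately have "Y - 0 *\<^sub>R block_mat (neg_idx l) (neg_idx l) (mat 1) \<in> psd_cone"
    unfolding Y_def using H_small by (intro block_diag_perturbation_psd) auto
  then have Y: "Y \<in> psd_cone" by simp
  have "off_blocks l (diag_mat l + H) = 0" using H_blocks by (simp add: off_blocks_add off_blocks_diag)
  then have "diag_mat l + H = X + block_mat (neg_idx l) (neg_idx l) (diag_mat l + H)"
    using block_decomposition[OF nz, of "diag_mat l + H"] by (simp add: X_def)
  moreover have "block_mat (neg_idx l) (neg_idx l) (diag_mat l + H) = - Y"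
    by (simp add: Y_def vec_eq_iff diag_mat_def)
  ultimately have XY: "X - (diag_mat l + H) = Y" by simp
  have Qt: "orthogonal_matrix (transpose Q)" using Q by (simp add: orthogonal_matrix_def)
  show ?thesis
  proof (fold X_def, rule proj_psd_eqI)
    show "orth_conj (transpose Q) X \<in> psd_cone" by (rule orth_conj_psd[OF X])
    show "orth_conj (transpose Q) X - orth_conj (transpose Q) (diag_mat l + H) \<in> psd_cone"
      using orth_conj_psd[OF Y] by (simp add: orth_conj_diff[symmetric] XY)
    have "X \<bullet> Y = 0"
      unfolding X_def Y_def by (rule block_inner_disjoint[OF pos_neg_idx_disjoint])
    then show "orth_conj (transpose Q) X
        \<bullet> (orth_conj (transpose Q) X - orth_conj (transpose Q) (diag_mat l + H)) = 0"
      by (simp add: orth_conj_diff[symmetric] XY orth_conj_inner[OF Qt])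
  qed
qed

lemma admm_step_eq:
  "admm_step A b C \<sigma> Z = projP A Z + (proj_psd Z - 2 *\<^sub>R projP A (proj_psd Z))
     + (opAadj A (matrix_inv (gramA A) *v b) + \<sigma> *\<^sub>R projP A C - \<sigma> *\<^sub>R C)"
  unfolding admm_step_def linear_add[OF linear_projP] linear_scale[OF linear_projP]
  by (simp add: algebra_simps)

lemma admm_step_minus_opM:
  fixes Z W Q :: "real^'n^'n" and l :: "real^'n"
  defines "R \<equiv> proj_psd Z - proj_psd W - opD Q l (Z - W)"
  shows "admm_step A b C \<sigma> Z - admm_step A b C \<sigma> W - opM A Q l (Z - W) = R - 2 *\<^sub>R projP A R"
proof -
  have "projP A Z = projP A W + projP A (Z - W)" by (simp flip: linear_add[OF linear_projP])
  then show ?thesis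
    unfolding admm_step_eq opM_def R_def
    by (simp add: linear_add[OF linear_projP] linear_diff[OF linear_projP] scaleR_2 algebra_simps)
qed

lemma admm_step_symmetric:
  assumes "\<forall>i. A i \<in> sym_mats" "C \<in> sym_mats" "Z \<in> sym_mats"
  shows "admm_step A b C \<sigma> Z \<in> sym_mats"
proof -
  have "proj_psd Z \<in> sym_mats"
    using assms(3) proj_psd_moreau(1)[of Z] psd_cone_symmetric by (simp add: sym_mats_def)
  moreover have "projP A X \<in> sym_mats" "opAadj A y \<in> sym_mats" for X y
    using assms(1) projP_symmetric opAadj_symmetric by (auto simp: sym_mats_def)
  ultimately show ?thesis
    unfolding admm_step_def using assms(2,3)
    by (intro subspace_add subspace_diff subspace_scale subspace_sym_mats) auto
qed

locale admm_solution = surjective_constraints A for A :: "'m::finite \<Rightarrow> real^'n^'n" +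
  fixes b :: "real^'m" and C :: "real^'n^'n" and \<sigma> :: real
    and Xs Ss :: "real^'n^'n" and ys :: "real^'m" and Q :: "real^'n^'n" and lam :: "real^'n"
  assumes KKT: "is_KKT A b C Xs ys Ss"
    and Q_orth: "orthogonal_matrix Q"
    and eig: "Xs - \<sigma> *\<^sub>R Ss = Q ** diag_mat lam ** transpose Q"
    and lam_nonzero: "\<forall>i. lam $ i \<noteq> 0"
    and Xs_eig: "Xs = Q ** diag_mat (\<chi> i. max (lam $ i) 0) ** transpose Q"
begin

definition gap :: real where
  "gap = Min (range (\<lambda>i. \<bar>lam$i\<bar>))"

lemma gap_le: "gap \<le> \<bar>lam$i\<bar>"
  by (simp add: gap_def)

lemma gap_pos: "0 < gap"
proof -
  have "gap \<in> range (\<lambda>i. \<bar>lam$i\<bar>)" unfolding gap_def by (rule Min_in) auto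
  then show ?thesis using lam_nonzero by auto
qed

lemma Zs_eq: "Xs - \<sigma> *\<^sub>R Ss = orth_conj (transpose Q) (diag_mat lam)"
  by (simp add: eig orth_conj_def)

lemma Zs_symmetric: "Xs - \<sigma> *\<^sub>R Ss \<in> sym_mats"
proof -
  have "transpose Xs = Xs" "transpose Ss = Ss" using KKT by (simp_all add: is_KKT_def psd_cone_symmetric)
  then show ?thesis by (simp add: sym_mats_def symmetric_iff_entries)
qed

lemma fixed_point_eigenbasis:
  assumes "H \<in> fix_sym (opM A Q lam)"
  shows "transpose (orth_conj Q H) = orth_conj Q H" "off_blocks lam (orth_conj Q H) = 0"
  using assms orth_conj_symmetric_iff[OF Q_orth] opM_fixed_point_block_diagonal[OF Q_orth lam_nonzero]
  by (auto simp: fix_sym_def sym_mats_def)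

text \<open>A small fixed point \<open>H\<close> of \<open>\<M>\<close> is block diagonal in the eigenbasis of \<open>Z\<^sub>\<star>\<close>, so the
  projection of \<open>Z\<^sub>\<star> + H\<close> keeps exactly the positive block.\<close>
lemma proj_psd_Zs_plus_fixed_eigenbasis:
  assumes H: "H \<in> fix_sym (opM A Q lam)" and H_small: "norm H \<le> gap"
  shows "orth_conj Q (proj_psd (Xs - \<sigma> *\<^sub>R Ss + H))
    = block_mat (pos_idx lam) (pos_idx lam) (diag_mat lam + orth_conj Q H)"
proof -
  have "Xs - \<sigma> *\<^sub>R Ss + H = orth_conj (transpose Q) (diag_mat lam + orth_conj Q H)"
    by (simp add: Zs_eq orth_conj_add orth_conj_inverse(1)[OF Q_orth])
  moreover have "norm (orth_conj Q H) \<le> gap" using H_small by (simp add: norm_orth_conj[OF Q_orth])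
  ultimately show ?thesis
    using proj_psd_block_diagonal[OF Q_orth lam_nonzero allI[OF gap_le] fixed_point_eigenbasis[OF H]]
    by (simp add: orth_conj_inverse(2)[OF Q_orth])
qed

lemma proj_psd_Zs_plus_fixed:
  assumes H: "H \<in> fix_sym (opM A Q lam)" and H_small: "norm H \<le> gap"
  shows "proj_psd (Xs - \<sigma> *\<^sub>R Ss + H) = Xs + opD Q lam H"
proof -
  have "diag_mat (\<chi> i. max (lam$i) 0) = block_mat (pos_idx lam) (pos_idx lam) (diag_mat lam)"
    by (auto simp: vec_eq_iff diag_mat_def pos_idx_def max_def)
  then have "orth_conj Q Xs = block_mat (pos_idx lam) (pos_idx lam) (diag_mat lam)"
    using orth_conj_inverse(2)[OF Q_orth] by (simp add: Xs_eig orth_conj_def)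
  moreover have "orth_conj Q (opD Q lam H) = block_mat (pos_idx lam) (pos_idx lam) (orth_conj Q H)"
    using hadamard_Omega_block_diagonal[OF lam_nonzero fixed_point_eigenbasis(2)[OF H]]
    by (simp add: opD_orth_conj orth_conj_inverse(2)[OF Q_orth])
  ultimately have "orth_conj Q (proj_psd (Xs - \<sigma> *\<^sub>R Ss + H)) = orth_conj Q (Xs + opD Q lam H)"
    by (simp add: proj_psd_Zs_plus_fixed_eigenbasis[OF H H_small] orth_conj_add block_mat_add)
  then show ?thesis by (metis orth_conj_inverse(1)[OF Q_orth])
qed

lemma fixed_point_near_Zs:
  assumes H: "H \<in> fix_sym (opM A Q lam)" and H_small: "norm H \<le> gap"
  shows "admm_step A b C \<sigma> (Xs - \<sigma> *\<^sub>R Ss + H) = Xs - \<sigma> *\<^sub>R Ss + H"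
proof -
  have fx: "projP A (H - opD Q lam H) + (opD Q lam H - projP A (opD Q lam H)) = H"
    using H by (simp add: fix_sym_def opM_def)
  have "opA A Xs = b" and C: "C = opAadj A ys + Ss" using KKT by (auto simp: is_KKT_def)
  then have b: "opAadj A (matrix_inv (gramA A) *v b) = projP A Xs" by (simp add: projP_def)
  have PC: "projP A C = opAadj A ys + projP A Ss"
    by (simp add: C linear_add[OF linear_projP] projP_opAadj)
  have PW: "projP A (Xs - \<sigma> *\<^sub>R Ss + H) = projP A Xs - \<sigma> *\<^sub>R projP A Ss + projP A H"
    and PD: "projP A (Xs + opD Q lam H) = projP A Xs + projP A (opD Q lam H)"
    and "projP A (H - opD Q lam H) = projP A H - projP A (opD Q lam H)"
    by (simp_all add: linear_add[OF linear_projP] linear_diff[OF linear_projP] linear_scale[OF linear_projP])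
  with fx have "projP A H - 2 *\<^sub>R projP A (opD Q lam H) + opD Q lam H = H"
    by (simp add: scaleR_2 algebra_simps)
  then show ?thesis
    unfolding admm_step_eq proj_psd_Zs_plus_fixed[OF H H_small] b PC PW PD
    by (simp add: C scaleR_2 algebra_simps)
qed

lemma perturbed_complementarity_eigenbasis:
  assumes H: "H \<in> fix_sym (opM A Q lam)" and Z: "Z \<in> sym_mats"
    and small: "norm H + norm (Z - (Xs - \<sigma> *\<^sub>R Ss + H)) \<le> gap/2"
  shows "perturbed_complementarity lam gap (orth_conj Q (proj_psd Z)) (orth_conj Q (proj_psd Z - Z))
    (orth_conj Q H) (orth_conj Q (Z - (Xs - \<sigma> *\<^sub>R Ss + H)))"
proof unfold_locales
  let ?W = "Xs - \<sigma> *\<^sub>R Ss + H"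
  have Zs: "transpose Z = Z" using Z by (simp add: sym_mats_def)
  have "norm H \<le> gap" using small norm_ge_zero[of "Z - ?W"] gap_pos by linarith
  note W = proj_psd_Zs_plus_fixed_eigenbasis[OF H this]
  have "transpose H = H" using H by (simp add: fix_sym_def sym_mats_def)
  then show "transpose (orth_conj Q (Z - ?W)) = orth_conj Q (Z - ?W)"
    using Zs Zs_symmetric orth_conj_symmetric_iff[OF Q_orth]
    by (simp add: sym_mats_def symmetric_iff_entries)
  show "orth_conj Q (proj_psd Z) \<in> psd_cone" "orth_conj Q (proj_psd Z - Z) \<in> psd_cone"
    "orth_conj Q (proj_psd Z) \<bullet> orth_conj Q (proj_psd Z - Z) = 0"
    using proj_psd_moreau[OF Zs] by (simp_all add: orth_conj_psd orth_conj_inner[OF Q_orth])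
  show "orth_conj Q (proj_psd Z) - orth_conj Q (proj_psd Z - Z)
      = diag_mat lam + orth_conj Q H + orth_conj Q (Z - ?W)"
    using Zs_eq orth_conj_inverse(2)[OF Q_orth] by (simp add: orth_conj_diff orth_conj_add)
  have "norm (orth_conj Q (proj_psd Z) - orth_conj Q (proj_psd ?W)) \<le> norm (orth_conj Q (Z - ?W))"
    using proj_psd_nonexpansive[of Z ?W]
    by (simp add: orth_conj_diff[symmetric] norm_orth_conj[OF Q_orth])
  then show "norm (orth_conj Q (proj_psd Z)
      - block_mat (pos_idx lam) (pos_idx lam) (diag_mat lam + orth_conj Q H)) \<le> norm (orth_conj Q (Z - ?W))"
    by (simp add: W)
  show "norm (orth_conj Q H) + norm (orth_conj Q (Z - ?W)) \<le> gap/2"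
    using small by (simp add: norm_orth_conj[OF Q_orth])
qed (use lam_nonzero gap_pos gap_le fixed_point_eigenbasis[OF H] in auto)

text \<open>The only nonlinearity of the ADMM map is the PSD projection, and \<open>I - 2\<P>\<close> is an isometry.\<close>
lemma admm_step_linearization:
  assumes H: "H \<in> fix_sym (opM A Q lam)" and Z: "Z \<in> sym_mats"
    and small: "norm H + norm (Z - (Xs - \<sigma> *\<^sub>R Ss + H)) \<le> gap/2"
  defines "E \<equiv> Z - (Xs - \<sigma> *\<^sub>R Ss + H)"
  shows "norm (admm_step A b C \<sigma> Z - admm_step A b C \<sigma> (Xs - \<sigma> *\<^sub>R Ss + H) - opM A Q lam E)
    \<le> 8/gap * norm E * (norm E + norm H)"
proof -
  define R where "R = proj_psd Z - proj_psd (Xs - \<sigma> *\<^sub>R Ss + H) - opD Q lam E"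
  have "norm H \<le> gap" using small norm_ge_zero[of E] gap_pos unfolding E_def by linarith
  then have "orth_conj Q R = orth_conj Q (proj_psd Z)
      - block_mat (pos_idx lam) (pos_idx lam) (diag_mat lam + orth_conj Q H)
      - hadamard (Omega lam) (orth_conj Q E)"
    by (simp add: R_def orth_conj_diff proj_psd_Zs_plus_fixed_eigenbasis[OF H] opD_orth_conj
        orth_conj_inverse(2)[OF Q_orth])
  note R_eigenbasis = this
  have "norm R \<le> 8/gap * norm E * (norm E + norm H)"
    unfolding norm_orth_conj[OF Q_orth, of R, symmetric] R_eigenbasis
    using perturbed_complementarity.second_order_bound[OF perturbed_complementarity_eigenbasis[OF H Z small]]
    by (simp add: norm_orth_conj[OF Q_orth] E_def)
  then show ?thesis
    unfolding E_def admm_step_minus_opM norm_reflect_projP by (simp add: R_def E_def)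
qed

end

section \<open>R-linear convergence of the distance to the fixed points\<close>

lemma closest_point_subspace:
  fixes F :: "'a::euclidean_space set"
  assumes "subspace F"
  shows "closest_point F x \<in> F" "norm (closest_point F x) \<le> norm x"
    and "g \<in> F \<Longrightarrow> norm (x - closest_point F x) \<le> norm (x - g)"
proof -
  have F: "closed F" "convex F" "0 \<in> F"
    using assms closed_subspace subspace_imp_convex subspace_0 by auto
  show "closest_point F x \<in> F" using closest_point_in_set[OF F(1)] F(3) by blast
  show "norm (closest_point F x) \<le> norm x"
    using closest_point_lipschitz[OF F(2,1), of x 0] closest_point_self[OF F(3)] F(3)
    by (auto simp: dist_norm)
  show "g \<in> F \<Longrightarrow> norm (x - closest_point F x) \<le> norm (x - g)"
    using closest_point_le[OF F(1)] by (simp add: dist_norm)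
qed

text \<open>The competitor in \<open>F\<close> for \<open>T w - z\<^sub>\<star>\<close> is \<open>H + \<Pi>\<^sub>F(w - (z\<^sub>\<star> + H))\<close>.\<close>
lemma distance_contraction_step:
  fixes T L :: "'a::euclidean_space \<Rightarrow> 'a"
  assumes F: "subspace F"
    and H: "H = closest_point F (w - zs)" and fixed: "T (zs + H) = zs + H"
    and linearization: "norm (T w - T (zs + H) - L (w - (zs + H))) \<le> \<epsilon> * norm (w - (zs + H))"
    and contraction: "norm (L (w - (zs + H)) - closest_point F (w - (zs + H))) \<le> s * norm (w - (zs + H))"
  shows "norm ((T w - zs) - closest_point F (T w - zs)) \<le> (\<epsilon> + s) * norm ((w - zs) - closest_point F (w - zs))"
proof -
  define E where "E = w - (zs + H)"
  define G where "G = H + closest_point F E"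
  have "G \<in> F" unfolding G_def H
    using closest_point_subspace(1)[OF F] by (intro subspace_add[OF F])
  then have "norm ((T w - zs) - closest_point F (T w - zs)) \<le> norm ((T w - zs) - G)"
    by (rule closest_point_subspace(3)[OF F])
  also have "(T w - zs) - G = (T w - T (zs + H) - L E) + (L E - closest_point F E)"
    using fixed by (simp add: G_def algebra_simps)
  also have "norm \<dots> \<le> norm (T w - T (zs + H) - L E) + norm (L E - closest_point F E)"
    by (rule norm_triangle_ineq)
  also have "\<dots> \<le> \<epsilon> * norm E + s * norm E"
    using linearization contraction unfolding E_def by (rule add_mono)
  finally show ?thesis by (simp add: E_def H algebra_simps)
qed

lemma eventually_geometric_decay:
  fixes \<delta> :: "nat \<Rightarrow> real"
  assumes step: "\<And>k. k \<ge> kbar \<Longrightarrow> \<delta> (Suc k) \<le> \<rho> * \<delta> k" and \<rho>: "0 < \<rho>"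
  shows "\<exists>\<alpha>>0. \<forall>k\<ge>kbar. \<delta> k \<le> \<alpha> * \<rho> ^ k"
proof (intro exI conjI allI impI)
  have geometric: "\<delta> (kbar + d) \<le> \<bar>\<delta> kbar\<bar> * \<rho> ^ d" for d
  proof (induction d)
    case (Suc d)
    have "\<delta> (kbar + Suc d) \<le> \<rho> * \<delta> (kbar + d)" using step[of "kbar + d"] by simp
    also have "\<dots> \<le> \<rho> * (\<bar>\<delta> kbar\<bar> * \<rho> ^ d)" using Suc \<rho> by (simp add: mult_left_mono)
    finally show ?case by (simp add: algebra_simps)
  qed simp
  show "0 < (\<bar>\<delta> kbar\<bar> + 1) / \<rho> ^ kbar" using \<rho> by simp
  fix k assume "kbar \<le> k"
  then obtain d where k: "k = kbar + d" using le_Suc_ex by blast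
  have "\<bar>\<delta> kbar\<bar> * \<rho> ^ d \<le> (\<bar>\<delta> kbar\<bar> + 1) * \<rho> ^ d" using \<rho> by simp
  then have "\<delta> k \<le> (\<bar>\<delta> kbar\<bar> + 1) * \<rho> ^ d" using geometric[of d] unfolding k by linarith
  then show "\<delta> k \<le> (\<bar>\<delta> kbar\<bar> + 1) / \<rho> ^ kbar * \<rho> ^ k"
    using \<rho> by (simp add: k power_add)
qed

lemma quadratic_error_le:
  fixes c x y \<epsilon> :: real
  assumes "0 \<le> x" "0 \<le> y" "x + y \<le> \<epsilon> / (\<bar>c\<bar> + 1)"
  shows "c * x * (x + y) \<le> \<epsilon> * x"
proof -
  have "c * (x + y) \<le> (\<bar>c\<bar> + 1) * (x + y)"
    using assms(1,2) by (intro mult_right_mono) auto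
  also have "\<dots> \<le> \<epsilon>"
    using assms(3) pos_le_divide_eq[of "\<bar>c\<bar> + 1"] by (simp add: mult.commute add_pos_nonneg)
  finally have "x * (c * (x + y)) \<le> x * \<epsilon>" using assms(1) by (rule mult_left_mono)
  then show ?thesis by (simp add: mult_ac)
qed

lemma distance_contraction_near:
  fixes T L :: "'a::euclidean_space \<Rightarrow> 'a"
  assumes S: "subspace S" and F: "subspace F" "F \<subseteq> S" and w: "w \<in> S" and zs: "zs \<in> S"
    and fixed: "\<And>H. H \<in> F \<Longrightarrow> norm H \<le> r \<Longrightarrow> T (zs + H) = zs + H"
    and linearization: "\<And>H w. H \<in> F \<Longrightarrow> w \<in> S \<Longrightarrow> norm H + norm (w - (zs + H)) \<le> r \<Longrightarrow>
      norm (T w - T (zs + H) - L (w - (zs + H)))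
        \<le> c * norm (w - (zs + H)) * (norm (w - (zs + H)) + norm H)"
    and contraction: "\<And>d. d \<in> S \<Longrightarrow> norm (L d - closest_point F d) \<le> s * norm d"
    and close: "2 * norm (w - zs) \<le> min r ((\<rho> - s) / (\<bar>c\<bar> + 1))"
  defines "H \<equiv> closest_point F (w - zs)"
  shows "T (zs + H) = zs + H"
    and "norm ((T w - zs) - closest_point F (T w - zs)) \<le> \<rho> * norm ((w - zs) - closest_point F (w - zs))"
proof -
  have HF: "H \<in> F" using closest_point_subspace(1)[OF F(1)] by (simp add: H_def)
  have E: "norm (w - (zs + H)) \<le> norm (w - zs)"
    using closest_point_subspace(3)[OF F(1) subspace_0[OF F(1)], of "w - zs"]
    by (simp add: H_def diff_diff_eq)
  have "norm H \<le> norm (w - zs)" using closest_point_subspace(2)[OF F(1)] by (simp add: H_def)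
  then have small: "norm H + norm (w - (zs + H)) \<le> min r ((\<rho> - s) / (\<bar>c\<bar> + 1))"
    using E close by linarith
  then show fixed_H: "T (zs + H) = zs + H" using fixed[OF HF] norm_ge_zero[of "w - (zs + H)"] by simp
  have "norm (T w - T (zs + H) - L (w - (zs + H)))
      \<le> c * norm (w - (zs + H)) * (norm (w - (zs + H)) + norm H)"
    using linearization[OF HF w] small by simp
  also have "\<dots> \<le> (\<rho> - s) * norm (w - (zs + H))"
    using small by (intro quadratic_error_le) auto
  finally have "norm ((T w - zs) - closest_point F (T w - zs))
      \<le> (\<rho> - s + s) * norm ((w - zs) - closest_point F (w - zs))"
    using F(2) HF
    by (intro distance_contraction_step[where T = T and L = L and w = w and zs = zs and H = H,
        OF F(1) H_def[THEN meta_eq_to_obj_eq] fixed_H] contraction subspace_diff[OF S w] subspace_add[OF S zs]) auto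
  then show "norm ((T w - zs) - closest_point F (T w - zs)) \<le> \<rho> * norm ((w - zs) - closest_point F (w - zs))"
    by simp
qed

theorem R_linear_convergence_to_fixed_points:
  fixes T L :: "'a::euclidean_space \<Rightarrow> 'a" and z :: "nat \<Rightarrow> 'a"
  assumes S: "subspace S" and F: "subspace F" "F \<subseteq> S"
    and iter: "\<And>k. z (Suc k) = T (z k)" and z_in: "\<And>k. z k \<in> S" and conv: "z \<longlonglongrightarrow> zs"
    and r: "0 < r"
    and fixed: "\<And>H. H \<in> F \<Longrightarrow> norm H \<le> r \<Longrightarrow> T (zs + H) = zs + H"
    and linearization: "\<And>H w. H \<in> F \<Longrightarrow> w \<in> S \<Longrightarrow> norm H + norm (w - (zs + H)) \<le> r \<Longrightarrow>
      norm (T w - T (zs + H) - L (w - (zs + H)))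
        \<le> c * norm (w - (zs + H)) * (norm (w - (zs + H)) + norm H)"
    and contraction: "\<And>d. d \<in> S \<Longrightarrow> norm (L d - closest_point F d) \<le> s * norm d"
    and \<rho>: "s < \<rho>" "0 < \<rho>"
  shows "\<exists>kbar. \<exists>\<alpha>>0. \<forall>k\<ge>kbar. infdist (z k) {w \<in> S. T w = w} \<le> \<alpha> * \<rho> ^ k"
proof -
  define H where "H k = closest_point F (z k - zs)" for k
  define \<delta> where "\<delta> k = norm ((z k - zs) - H k)" for k
  have zs: "zs \<in> S" using closed_sequentially[OF closed_subspace[OF S] z_in conv] .
  have "0 < min r ((\<rho> - s) / (\<bar>c\<bar> + 1)) / 2" using r \<rho> by (simp add: add_pos_nonneg)
  then obtain kbar where kbar: "\<And>k. k \<ge> kbar \<Longrightarrow> norm (z k - zs) < min r ((\<rho> - s) / (\<bar>c\<bar> + 1)) / 2"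
    using conv unfolding LIMSEQ_iff by blast
  have near: "T (zs + H k) = zs + H k" "\<delta> (Suc k) \<le> \<rho> * \<delta> k" if "k \<ge> kbar" for k
  proof -
    have "2 * norm (z k - zs) \<le> min r ((\<rho> - s) / (\<bar>c\<bar> + 1))" using kbar[OF that] by simp
    note step = distance_contraction_near[OF S F z_in zs fixed linearization contraction this]
    show "T (zs + H k) = zs + H k" "\<delta> (Suc k) \<le> \<rho> * \<delta> k"
      using step by (simp_all add: H_def \<delta>_def iter)
  qed
  obtain \<alpha> where \<alpha>: "\<alpha> > 0" "\<And>k. k \<ge> kbar \<Longrightarrow> \<delta> k \<le> \<alpha> * \<rho> ^ k"
    using eventually_geometric_decay[of kbar \<delta> \<rho>] near(2) \<rho> by blast
  have "infdist (z k) {w \<in> S. T w = w} \<le> \<delta> k" if "k \<ge> kbar" for k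
  proof -
    have "zs + H k \<in> {w \<in> S. T w = w}"
      using near(1)[OF that] F closest_point_subspace(1)[OF F(1)] subspace_add[OF S zs] by (auto simp: H_def)
    then show ?thesis using infdist_le[of "zs + H k" _ "z k"] by (simp add: \<delta>_def dist_norm diff_diff_eq)
  qed
  with \<alpha> show ?thesis by (blast intro: order_trans)
qed

lemma sym_opnorm_residual:
  fixes L :: "real^'n^'n \<Rightarrow> real^'n^'n"
  assumes L: "linear L"
  defines "s \<equiv> sym_opnorm (\<lambda>H. L H - closest_point (fix_sym L) H)"
  shows "0 \<le> s" and "H \<in> sym_mats \<Longrightarrow> norm (L H - closest_point (fix_sym L) H) \<le> s * norm H"
proof -
  let ?f = "\<lambda>H. norm (L H - closest_point (fix_sym L) H) / norm H"
  obtain K where K: "\<And>x. norm (L x) \<le> norm x * K" and "0 < K"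
    using bounded_linear.pos_bounded[OF L[unfolded linear_conv_bounded_linear]] by blast
  have "?f H \<le> K + 1" for H
  proof (cases "H = 0")
    case False
    have "norm (L H - closest_point (fix_sym L) H) \<le> norm (L H) + norm (closest_point (fix_sym L) H)"
      by (rule norm_triangle_ineq4)
    also have "\<dots> \<le> (K + 1) * norm H"
      using K[of H] closest_point_subspace(2)[OF subspace_fix_sym[OF L], of H] by (simp add: algebra_simps)
    finally show ?thesis using False by (simp add: divide_le_eq)
  qed (use \<open>0 < K\<close> in simp)
  then have le_s: "?f H \<le> s" if "H \<in> sym_mats" "H \<noteq> 0" for H
    unfolding s_def sym_opnorm_def using that by (intro cSUP_upper2 bdd_aboveI2) auto
  have "(mat 1 :: real^'n^'n) \<in> sym_mats" by (simp add: sym_mats_def)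
  moreover have "(mat 1 :: real^'n^'n) \<noteq> 0" by (simp add: vec_eq_iff mat_def)
  ultimately show "0 \<le> s" using le_s by (meson divide_nonneg_nonneg norm_ge_zero order_trans)
  show "norm (L H - closest_point (fix_sym L) H) \<le> s * norm H" if "H \<in> sym_mats"
  proof (cases "H = 0")
    case True
    then show ?thesis
      using closest_point_self[OF subspace_0[OF subspace_fix_sym[OF L]]] by (simp add: linear_0[OF L])
  qed (use le_s[OF that] in \<open>simp add: divide_le_eq\<close>)
qed

theorem theorem4:
  fixes A :: "'m::finite \<Rightarrow> real^'n^'n" and b :: "real^'m" and C :: "real^'n^'n"
    and \<sigma> :: real and Z :: "nat \<Rightarrow> real^'n^'n"
    and Xs Ss :: "real^'n^'n" and ys :: "real^'m"
    and Q :: "real^'n^'n" and lam :: "real^'n"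
  assumes A_sym: "\<forall>i. A i \<in> sym_mats"
    and C_sym: "C \<in> sym_mats"
    and A_surj: "\<forall>v. \<exists>X \<in> sym_mats. opA A X = v"
    and KKT_nonempty: "\<exists>X y S. is_KKT A b C X y S"
    and sigma_pos: "\<sigma> > 0"
    and Z0: "Z 0 \<in> sym_mats"
    and iter: "\<forall>k. Z (Suc k) = admm_step A b C \<sigma> (Z k)"
    and KKT: "is_KKT A b C Xs ys Ss"
    and strict_compl: "rank Xs + rank Ss = CARD('n)"
    and conv: "Z \<longlonglongrightarrow> Xs - \<sigma> *\<^sub>R Ss"
    and Q_orth: "orthogonal_matrix Q"
    and eig: "Xs - \<sigma> *\<^sub>R Ss = Q ** diag_mat lam ** transpose Q"
    and lam_nz: "\<forall>i. lam $ i \<noteq> 0"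
    and Xs_eig: "Xs = Q ** diag_mat (\<chi> i. max (lam $ i) 0) ** transpose Q"
  shows "\<forall>\<rho>0. sym_opnorm (\<lambda>H. opM A Q lam H - closest_point (fix_sym (opM A Q lam)) H) < \<rho>0
            \<and> \<rho>0 < 1 \<longrightarrow>
          (\<exists>kbar::nat. \<exists>\<alpha>>0. \<exists>\<rho>. 0 < \<rho> \<and> \<rho> < 1 \<and>
             (\<forall>k\<ge>kbar. infdist (Z k) {W \<in> sym_mats. admm_step A b C \<sigma> W = W} \<le> \<alpha> * \<rho> ^ k))"
proof (intro allI impI)
  fix \<rho>0 :: real
  let ?M = "opM A Q lam"
  assume \<rho>0: "sym_opnorm (\<lambda>H. ?M H - closest_point (fix_sym ?M) H) < \<rho>0 \<and> \<rho>0 < 1"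
  interpret admm_solution A b C \<sigma> Xs Ss ys Q lam
    using A_sym A_surj KKT Q_orth eig lam_nz Xs_eig by unfold_locales auto
  note residual = sym_opnorm_residual[OF linear_opM]
  have \<rho>0_pos: "0 < \<rho>0" using \<rho>0 residual(1)[of A Q lam] by linarith
  have Z_sym: "Z k \<in> sym_mats" for k
    by (induction k) (use Z0 iter admm_step_symmetric[OF A_sym C_sym] in auto)
  have fixed: "admm_step A b C \<sigma> (Xs - \<sigma> *\<^sub>R Ss + H) = Xs - \<sigma> *\<^sub>R Ss + H"
    if "H \<in> fix_sym ?M" "norm H \<le> gap/2" for H
    using fixed_point_near_Zs[OF that(1)] that(2) gap_pos by simp
  have "\<exists>kbar. \<exists>\<alpha>>0. \<forall>k\<ge>kbar. infdist (Z k) {W \<in> sym_mats. admm_step A b C \<sigma> W = W} \<le> \<alpha> * \<rho>0 ^ k"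
    using R_linear_convergence_to_fixed_points[where T = "admm_step A b C \<sigma>" and L = ?M
        and r = "gap/2" and \<rho> = \<rho>0,
        OF subspace_sym_mats subspace_fix_sym[OF linear_opM] fix_sym_subset iter[rule_format] Z_sym conv
        _ fixed admm_step_linearization residual(2)] \<rho>0 \<rho>0_pos gap_pos
    by simp
  then show "\<exists>kbar. \<exists>\<alpha>>0. \<exists>\<rho>. 0 < \<rho> \<and> \<rho> < 1 \<and>
      (\<forall>k\<ge>kbar. infdist (Z k) {W \<in> sym_mats. admm_step A b C \<sigma> W = W} \<le> \<alpha> * \<rho> ^ k)"
    using \<rho>0 \<rho>0_pos by blast
qed

end
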